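(* Let $m_0$ be a positive integer with the covering property. There exists $\zeta_2>0$, not depending on $d$, such that if $0\le\zeta<\zeta_2$, then there exist a positive constant $\Lambda_2=\Lambda_2(\gamma,N,m_0,\zeta)$ and almost surely finite positive random variables $C^l_2$ ($1\le l\le d$) such that, with $C_2:=\max_{1\le l\le d}C^l_2$, almost surely for all $n\ge0$: $$\mathcal D(\mathfrak x^l_n)\le C^l_2\,e^{-\Lambda_2 n}\quad(1\le l\le d),\qquad \max_{i,j}\|\mathbf x^i_n-\mathbf x^j_n\|_\infty\le C_2\,e^{-\Lambda_2 n}.$$
   Context: Setting (random batch CBO). Fix integers $N\ge2$, $d\ge1$, batch size $P\ge2$, drift $\gamma\in(0,1)$, noise level $\zeta\ge0$; $\mathcal N=\{1,\dots,N\}$. Weight functions $\omega_{S,j}:(\mathbb R^d)^N\to[0,\infty)$ for nonempty $S\subseteq\mathcal N$, $j\in\mathcal N$, with $\sum_{j\in S}\omega_{S,j}=1$ and $\omega_{S,j}=0$ for $j\notin S$. $\mathcal A$ is the set of partitions of $\mathcal N$ into $\lceil N/P\rceil$ batches, all of size $P$ except possibly one of size at most $P$; $(\mathcal B^n)_{n\ge0}$ i.i.d. uniform on $\mathcal A$; $[i]_n$ is the batch of $\mathcal B^n$ containing $i$. Noise arrays $(\eta^{i,l}_n)_{i,l}$ are i.i.d. in $n$ with $\mathbb E\eta^{i,l}_n=0$, $\mathbb E|\eta^{i,l}_n|^2\le\zeta^2$; initial data $X_0$ (deterministic or random), batches, and noises are mutually independent. The dynamics is $\mathbf x^i_{n+1}=\mathbf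 x^i_n-\gamma(\mathbf x^i_n-\bar{\mathbf x}^{[i]_n,*}_n)-\sum_{l=1}^d(x^{i,l}_n-\bar x^{[i]_n,*,l}_n)\eta^{i,l}_n\mathbf e_l$ with $\bar{\mathbf x}^{S,*}_n=\sum_j\omega_{S,j}(X_n)\mathbf x^j_n$, $X_n=(\mathbf x^1_n,\dots,\mathbf x^N_n)$. Let $\mathfrak x^l_n:=(x^{1,l}_n,\dots,x^{N,l}_n)^\top$ and $\mathcal D(\mathbf z):=\max_iz_i-\min_iz_i$. A positive integer $m_0$ has the covering property if there exist partitions $\mathcal P^1,\dots,\mathcal P^{m_0}\in\mathcal A$ such that every pair $i,j\in\mathcal N$ lies in a common block of some $\mathcal P^k$. *)

theory Defs
  imports "HOL-Probability.Probability" "HOL-Library.Disjoint_Sets"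
begin

text \<open>Particles are indexed by 1..N, coordinates by 1..d.
  A configuration in (R^d)^N is an element of the extensional function space
  with carrier {1..N} -> {1..d} -> real.\<close>

definition stateM :: "nat \<Rightarrow> nat \<Rightarrow> (nat \<Rightarrow> nat \<Rightarrow> real) measure" where
  "stateM N d = (\<Pi>\<^sub>M i\<in>{1..N}. \<Pi>\<^sub>M l\<in>{1..d}. (borel :: real measure))"

definition arr :: "nat \<Rightarrow> nat \<Rightarrow> (nat \<Rightarrow> nat \<Rightarrow> 'a \<Rightarrow> real) \<Rightarrow> 'a \<Rightarrow> (nat \<Rightarrow> nat \<Rightarrow> real)" where
  "arr N d y \<omega> = (\<lambda>i\<in>{1..N}. \<lambda>l\<in>{1..d}. y i l \<omega>)"

definition batch_partitions :: "nat \<Rightarrow> nat \<Rightarrow> nat set set set" where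
  "batch_partitions N P = {Q. partition_on {1..N} Q
      \<and> card Q = nat \<lceil>real N / real P\<rceil>
      \<and> (\<forall>S\<in>Q. card S \<le> P)
      \<and> (\<exists>S0\<in>Q. \<forall>S\<in>Q. S \<noteq> S0 \<longrightarrow> card S = P)}"

definition blk :: "nat set set \<Rightarrow> nat \<Rightarrow> nat set" where
  "blk Q i = (THE S. S \<in> Q \<and> i \<in> S)"

definition covering_property :: "nat \<Rightarrow> nat \<Rightarrow> nat \<Rightarrow> bool" where
  "covering_property N P m0 \<longleftrightarrow> 0 < m0 \<and>
     (\<exists>Ps :: nat \<Rightarrow> nat set set. (\<forall>k\<in>{1..m0}. Ps k \<in> batch_partitions N P) \<and>
        (\<forall>i\<in>{1..N}. \<forall>j\<in>{1..N}. \<exists>k\<in>{1..m0}. \<exists>S\<in>Ps k. i \<in> S \<and> j \<in> S))"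

definition admissible_weights ::
  "nat \<Rightarrow> nat \<Rightarrow> (nat set \<Rightarrow> nat \<Rightarrow> (nat \<Rightarrow> nat \<Rightarrow> real) \<Rightarrow> real) \<Rightarrow> bool" where
  "admissible_weights N d w \<longleftrightarrow>
     (\<forall>S j. S \<noteq> {} \<and> S \<subseteq> {1..N} \<and> j \<in> {1..N} \<longrightarrow> w S j \<in> borel_measurable (stateM N d)) \<and>
     (\<forall>S. S \<noteq> {} \<and> S \<subseteq> {1..N} \<longrightarrow> (\<forall>X\<in>space (stateM N d).
        (\<forall>j\<in>{1..N}. 0 \<le> w S j X) \<and> (\<forall>j\<in>{1..N}. j \<notin> S \<longrightarrow> w S j X = 0) \<and>
        (\<Sum>j\<in>S. w S j X) = 1))"

datatype rv_index = Init | Batch nat | Noise nat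

definition rbcbo_model ::
  "nat \<Rightarrow> nat \<Rightarrow> real \<Rightarrow> real \<Rightarrow> nat \<Rightarrow>
   (nat set \<Rightarrow> nat \<Rightarrow> (nat \<Rightarrow> nat \<Rightarrow> real) \<Rightarrow> real) \<Rightarrow> 'a measure \<Rightarrow>
   (nat \<Rightarrow> 'a \<Rightarrow> nat set set) \<Rightarrow> (nat \<Rightarrow> nat \<Rightarrow> nat \<Rightarrow> 'a \<Rightarrow> real) \<Rightarrow>
   (nat \<Rightarrow> nat \<Rightarrow> 'a \<Rightarrow> real) \<Rightarrow> (nat \<Rightarrow> nat \<Rightarrow> nat \<Rightarrow> 'a \<Rightarrow> real) \<Rightarrow> bool" where
  "rbcbo_model N P \<gamma> \<zeta> d w M B \<eta> X0 x \<longleftrightarrow>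
     prob_space M \<and>
     admissible_weights N d w \<and>
     \<comment> \<open>batches: i.i.d. uniform on A\<close>
     (\<forall>n. B n \<in> measurable M (count_space UNIV) \<and>
          (\<forall>\<omega>\<in>space M. B n \<omega> \<in> batch_partitions N P) \<and>
          (\<forall>Q\<in>batch_partitions N P.
              measure M {\<omega>\<in>space M. B n \<omega> = Q} = 1 / real (card (batch_partitions N P)))) \<and>
     \<comment> \<open>initial data\<close>
     arr N d X0 \<in> measurable M (stateM N d) \<and>
     \<comment> \<open>noise arrays: identically distributed in n, centred, second moment at most zeta^2\<close>
     (\<forall>n. arr N d (\<eta> n) \<in> measurable M (stateM N d) \<and>
          distr M (stateM N d) (arr N d (\<eta> n)) = distr M (stateM N d) (arr N d (\<eta> 0)) \<and>
          (\<forall>i\<in>{1..N}. \<forall>l\<in>{1..d}.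
              integrable M (\<eta> n i l) \<and> (\<integral>\<omega>. \<eta> n i l \<omega> \<partial>M) = 0 \<and>
              integrable M (\<lambda>\<omega>. (\<eta> n i l \<omega>)\<^sup>2) \<and> (\<integral>\<omega>. (\<eta> n i l \<omega>)\<^sup>2 \<partial>M) \<le> \<zeta>\<^sup>2)) \<and>
     \<comment> \<open>mutual independence of X0, all batches and all noise arrays\<close>
     prob_space.indep_sets M (\<lambda>k. case k of
         Init \<Rightarrow> {arr N d X0 -` A \<inter> space M | A. A \<in> sets (stateM N d)}
       | Batch n \<Rightarrow> {B n -` A \<inter> space M | A. A \<in> sets (count_space UNIV)}
       | Noise n \<Rightarrow> {arr N d (\<eta> n) -` A \<inter> space M | A. A \<in> sets (stateM N d)}) UNIV \<and>
     \<comment> \<open>dynamics\<close>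
     (\<forall>\<omega>\<in>space M. \<forall>i\<in>{1..N}. \<forall>l\<in>{1..d}. x 0 i l \<omega> = X0 i l \<omega>) \<and>
     (\<forall>n. \<forall>\<omega>\<in>space M. \<forall>i\<in>{1..N}. \<forall>l\<in>{1..d}.
        (let S = blk (B n \<omega>) i;
             xbar = (\<Sum>j\<in>{1..N}. w S j (arr N d (x n) \<omega>) * x n j l \<omega>)
         in x (Suc n) i l \<omega> = x n i l \<omega> - \<gamma> * (x n i l \<omega> - xbar)
                               - (x n i l \<omega> - xbar) * \<eta> n i l \<omega>))"

definition spread :: "nat \<Rightarrow> (nat \<Rightarrow> real) \<Rightarrow> real" where
  "spread N z = (MAX i\<in>{1..N}. z i) - (MIN i\<in>{1..N}. z i)"

end

theory Submission
  imports Defs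
begin

text \<open>Fix a coordinate and let D(n) be the spread of the particles at time n. Every particle
  moves towards a convex combination of the particles, so in one step the spread grows at most
  by the factor 1 + 2 e(n), where e(n) is the sum of the absolute noises. If during m0
  consecutive steps the batches are exactly the partitions of the covering property, an event of
  probability p = |A|^(-m0), then the two extreme particles have shared a batch mean in which
  some particle has weight at least 1/P; this lifts the minimum, lowers the maximum, and the
  spread contracts by 1 - \<delta> with \<delta> = \<gamma>/P (1 - \<gamma>)^(m0 - 1). The noise and the batches at
  time n are independent of the configuration at time n, so taking expectations turns these
  pathwise inequalities into linear recursions for a(n) = E[D(n) / (1 + D(0))]. For small noise
  they give a(n + m0) \<le> (1 - \<delta> p / 2) a(n), hence \<Sum> a(n) exp(\<Lambda> n) < \<infinity> for a smaller
  rate \<Lambda>, and by monotone convergence D(n) exp(\<Lambda> n) / (1 + D(0)) is almost surely bounded.\<close>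

section \<open>Consensus steps with multiplicative noise\<close>


lemma weighted_mean_ge:
  fixes W z :: "'i \<Rightarrow> real"
  assumes "\<And>c. c \<in> I \<Longrightarrow> 0 \<le> W c" and "(\<Sum>c\<in>I. W c) = 1" and "\<And>c. c \<in> I \<Longrightarrow> L \<le> z c"
  shows "L \<le> (\<Sum>c\<in>I. W c * z c)"
proof -
  have "L = (\<Sum>c\<in>I. W c * L)" using assms(2) by (simp add: sum_distrib_right[symmetric])
  also have "\<dots> \<le> (\<Sum>c\<in>I. W c * z c)"
    by (rule sum_mono) (simp add: assms(1,3) mult_left_mono)
  finally show ?thesis .
qed

lemma weighted_mean_ge_heavy:
  fixes W z :: "'i \<Rightarrow> real"
  assumes "finite I" and "\<And>c. c \<in> I \<Longrightarrow> 0 \<le> W c" and "(\<Sum>c\<in>I. W c) = 1"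
    and "\<And>c. c \<in> I \<Longrightarrow> L \<le> z c" and "h \<in> I"
  shows "L + W h * (z h - L) \<le> (\<Sum>c\<in>I. W c * z c)"
proof -
  have "W h * (z h - L) \<le> (\<Sum>c\<in>I. W c * (z c - L))"
    by (rule member_le_sum[OF assms(5)]) (auto simp: assms(1,2,4))
  also have "\<dots> = (\<Sum>c\<in>I. W c * z c) - L"
    using assms(3) by (simp add: right_diff_distrib sum_subtractf sum_distrib_right[symmetric])
  finally show ?thesis by simp
qed

lemma ex_weight_ge_inverse_card:
  fixes W :: "'i \<Rightarrow> real"
  assumes "finite S" and "S \<noteq> {}" and "card S \<le> P" and "(\<Sum>c\<in>S. W c) = 1"
  shows "\<exists>h\<in>S. 1 / real P \<le> W h"
proof (rule ccontr)
  assume "\<not> ?thesis"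
  then have "(\<Sum>c\<in>S. W c) < (\<Sum>c\<in>S. 1 / real P)"
    by (intro sum_strict_mono assms(1,2)) auto
  also have "\<dots> \<le> 1"
    using assms(3) by (cases "P = 0") (simp_all add: divide_le_eq_1)
  finally show False using assms(4) by simp
qed

locale noisy_consensus =
  fixes I :: "'i set" and z :: "nat \<Rightarrow> 'i \<Rightarrow> real" and W :: "nat \<Rightarrow> 'i \<Rightarrow> 'i \<Rightarrow> real"
    and e :: "nat \<Rightarrow> 'i \<Rightarrow> real" and \<gamma> :: real
  assumes finite_I: "finite I" and I_nonempty: "I \<noteq> {}"
    and weights_nonneg: "\<And>k i c. i \<in> I \<Longrightarrow> c \<in> I \<Longrightarrow> 0 \<le> W k i c"
    and weights_sum: "\<And>k i. i \<in> I \<Longrightarrow> (\<Sum>c\<in>I. W k i c) = 1"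
    and \<gamma>_nonneg: "0 \<le> \<gamma>" and \<gamma>_le_1: "\<gamma> \<le> 1"
    and step: "\<And>k i. i \<in> I \<Longrightarrow> z (Suc k) i = z k i - \<gamma> * (z k i - (\<Sum>c\<in>I. W k i c * z k c))
                 - (z k i - (\<Sum>c\<in>I. W k i c * z k c)) * e k i"
begin

definition mean :: "nat \<Rightarrow> 'i \<Rightarrow> real" where
  "mean k i = (\<Sum>c\<in>I. W k i c * z k c)"

definition zmax :: "nat \<Rightarrow> real" where "zmax k = Max (z k ` I)"
definition zmin :: "nat \<Rightarrow> real" where "zmin k = Min (z k ` I)"
definition width :: "nat \<Rightarrow> real" where "width k = zmax k - zmin k"

definition noise_bound :: "nat \<Rightarrow> real" where
  "noise_bound k = (\<Sum>i\<in>I. \<bar>e k i\<bar>) * width k"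

lemma step_mean: "i \<in> I \<Longrightarrow> z (Suc k) i = (1 - \<gamma>) * z k i + \<gamma> * mean k i - (z k i - mean k i) * e k i"
  using step[of i k] unfolding mean_def by (simp add: algebra_simps)

lemma noisy_consensus_uminus: "noisy_consensus I (\<lambda>k i. - z k i) W e \<gamma>"
proof
  fix k i assume i: "i \<in> I"
  show "- z (Suc k) i = - z k i - \<gamma> * (- z k i - (\<Sum>c\<in>I. W k i c * - z k c)) -
          (- z k i - (\<Sum>c\<in>I. W k i c * - z k c)) * e k i"
    using step[OF i, of k] by (simp add: sum_negf algebra_simps)
qed (use finite_I I_nonempty weights_nonneg weights_sum \<gamma>_nonneg \<gamma>_le_1 in auto)

lemma mean_uminus: "noisy_consensus.mean I (\<lambda>k i. - z k i) W k i = - mean k i"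
  unfolding noisy_consensus.mean_def[OF noisy_consensus_uminus] mean_def by (simp add: sum_negf)

lemma mean_ge: "i \<in> I \<Longrightarrow> (\<And>c. c \<in> I \<Longrightarrow> L \<le> z k c) \<Longrightarrow> L \<le> mean k i"
  unfolding mean_def by (rule weighted_mean_ge) (auto simp: weights_nonneg weights_sum)

lemma step_ge:
  assumes "i \<in> I" and "L + u \<le> z k i" and "L + v \<le> mean k i"
    and "\<bar>(z k i - mean k i) * e k i\<bar> \<le> \<beta>"
  shows "L + (1 - \<gamma>) * u + \<gamma> * v - \<beta> \<le> z (Suc k) i"
proof -
  have "L + (1 - \<gamma>) * u + \<gamma> * v = (1 - \<gamma>) * (L + u) + \<gamma> * (L + v)" by (simp add: algebra_simps)
  also have "\<dots> \<le> (1 - \<gamma>) * z k i + \<gamma> * mean k i"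
    using assms(2,3) \<gamma>_nonneg \<gamma>_le_1 by (intro add_mono mult_left_mono) auto
  finally show ?thesis using step_mean[OF assms(1), of k] assms(4) by linarith
qed

lemma lower_bound_propagates:
  assumes noise: "\<And>k i. n \<le> k \<Longrightarrow> i \<in> I \<Longrightarrow> \<bar>(z k i - mean k i) * e k i\<bar> \<le> \<beta> k"
    and lower: "\<And>c. c \<in> I \<Longrightarrow> L \<le> z n c" and c: "c \<in> I"
  shows "L - (\<Sum>q\<in>{n..<n+t}. \<beta> q) \<le> z (n+t) c"
  using c
proof (induction t arbitrary: c)
  case 0
  then show ?case using lower by simp
next
  case (Suc t)
  let ?L = "L - (\<Sum>q\<in>{n..<n+t}. \<beta> q)"
  have "?L + 0 \<le> mean (n+t) c" using Suc by (intro mean_ge) auto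
  then have "?L + (1 - \<gamma>) * 0 + \<gamma> * 0 - \<beta> (n+t) \<le> z (Suc (n+t)) c"
    using Suc by (intro step_ge noise) auto
  then show ?case by simp
qed

lemma noise_bound_nonneg_of_dominated:
  assumes "\<And>i. i \<in> I \<Longrightarrow> \<bar>(z k i - mean k i) * e k i\<bar> \<le> \<beta>"
  shows "0 \<le> \<beta>"
  using assms I_nonempty by (meson abs_ge_zero ex_in_conv order_trans)

lemma lower_bound_lifted:
  assumes noise: "\<And>k i. n \<le> k \<Longrightarrow> i \<in> I \<Longrightarrow> \<bar>(z k i - mean k i) * e k i\<bar> \<le> \<beta> k"
    and lower: "\<And>k c. n \<le> k \<Longrightarrow> c \<in> I \<Longrightarrow> L - (\<Sum>q\<in>{n..<k}. \<beta> q) \<le> z k c"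
    and k0: "n \<le> k0" and i: "i \<in> I" and h: "h \<in> I" and a: "0 \<le> a" "a \<le> W k0 i h"
  shows "L - (\<Sum>q\<in>{n..<Suc k0 + t}. \<beta> q) + \<gamma> * a * (1 - \<gamma>)^t * (z k0 h - L) \<le> z (Suc k0 + t) i"
proof (induction t)
  case 0
  let ?L = "L - (\<Sum>q\<in>{n..<k0}. \<beta> q)"
  have "0 \<le> \<beta> q" if "n \<le> q" for q
    by (rule noise_bound_nonneg_of_dominated[of q]) (rule noise[OF that])
  then have sum_nonneg: "0 \<le> (\<Sum>q\<in>{n..<k0}. \<beta> q)" by (intro sum_nonneg) auto
  have "?L + W k0 i h * (z k0 h - ?L) \<le> mean k0 i"
    unfolding mean_def
    by (rule weighted_mean_ge_heavy) (use finite_I weights_nonneg weights_sum lower k0 i h in auto)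
  moreover have "a * (z k0 h - L) \<le> a * (z k0 h - ?L)"
    using a sum_nonneg by (intro mult_left_mono) auto
  moreover have "\<dots> \<le> W k0 i h * (z k0 h - ?L)"
    using a lower[OF k0 h] by (intro mult_right_mono) auto
  ultimately have "?L + a * (z k0 h - L) \<le> mean k0 i" by linarith
  then have "?L + (1 - \<gamma>) * 0 + \<gamma> * (a * (z k0 h - L)) - \<beta> k0 \<le> z (Suc k0) i"
    using lower[OF k0 i] by (intro step_ge i noise k0) auto
  then show ?case using k0 by (simp add: algebra_simps)
next
  case (Suc t)
  let ?k = "Suc k0 + t"
  let ?L = "L - (\<Sum>q\<in>{n..<?k}. \<beta> q)"
  let ?u = "\<gamma> * a * (1 - \<gamma>)^t * (z k0 h - L)"
  have "?L + 0 \<le> mean ?k i" using lower[of ?k] k0 by (intro mean_ge i) auto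
  then have "?L + (1 - \<gamma>) * ?u + \<gamma> * 0 - \<beta> ?k \<le> z (Suc ?k) i"
    using Suc.IH k0 by (intro step_ge i noise) auto
  then show ?case using k0 by (simp add: algebra_simps)
qed

lemma zmin_le_le_zmax: "c \<in> I \<Longrightarrow> zmin k \<le> z k c \<and> z k c \<le> zmax k"
  unfolding zmin_def zmax_def using finite_I by auto

lemma width_nonneg: "0 \<le> width k"
proof -
  obtain c where "c \<in> I" using I_nonempty by blast
  from zmin_le_le_zmax[OF this, of k] show ?thesis unfolding width_def by linarith
qed

lemma mean_between: "i \<in> I \<Longrightarrow> zmin k \<le> mean k i \<and> mean k i \<le> zmax k"
proof
  assume i: "i \<in> I"
  show "zmin k \<le> mean k i" by (rule mean_ge[OF i]) (use zmin_le_le_zmax in auto)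
  have "- zmax k \<le> (\<Sum>c\<in>I. W k i c * (- z k c))"
    by (rule weighted_mean_ge) (use weights_nonneg[OF i] weights_sum[OF i] zmin_le_le_zmax in auto)
  then show "mean k i \<le> zmax k" unfolding mean_def by (simp add: sum_negf)
qed

lemma noise_term_le: "i \<in> I \<Longrightarrow> \<bar>(z k i - mean k i) * e k i\<bar> \<le> noise_bound k"
proof -
  assume i: "i \<in> I"
  have "\<bar>z k i - mean k i\<bar> \<le> width k"
    using zmin_le_le_zmax[OF i, of k] mean_between[OF i, of k] unfolding width_def
    by (simp add: abs_le_iff)
  moreover have "\<bar>e k i\<bar> \<le> (\<Sum>i\<in>I. \<bar>e k i\<bar>)" by (rule member_le_sum[OF i]) (auto simp: finite_I)
  ultimately have "\<bar>z k i - mean k i\<bar> * \<bar>e k i\<bar> \<le> width k * (\<Sum>i\<in>I. \<bar>e k i\<bar>)"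
    using width_nonneg by (intro mult_mono) auto
  then show ?thesis unfolding noise_bound_def abs_mult by (simp add: mult.commute)
qed

lemma noise_term_le_uminus:
  "i \<in> I \<Longrightarrow> \<bar>(- z k i - noisy_consensus.mean I (\<lambda>k i. - z k i) W k i) * e k i\<bar> \<le> noise_bound k"
  using noise_term_le[of i k] by (simp add: mean_uminus abs_mult abs_minus_commute)

lemma range_after_steps:
  assumes "c \<in> I"
  shows "zmin n - (\<Sum>q\<in>{n..<n+t}. noise_bound q) \<le> z (n+t) c"
    and "z (n+t) c \<le> zmax n + (\<Sum>q\<in>{n..<n+t}. noise_bound q)"
proof -
  show "zmin n - (\<Sum>q\<in>{n..<n+t}. noise_bound q) \<le> z (n+t) c"
    by (rule lower_bound_propagates[OF _ _ assms]) (auto simp: noise_term_le zmin_le_le_zmax)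
  have "- zmax n - (\<Sum>q\<in>{n..<n+t}. noise_bound q) \<le> - z (n+t) c"
    by (rule noisy_consensus.lower_bound_propagates[OF noisy_consensus_uminus _ _ assms])
      (auto simp: noise_term_le_uminus zmin_le_le_zmax)
  then show "z (n+t) c \<le> zmax n + (\<Sum>q\<in>{n..<n+t}. noise_bound q)" by simp
qed

lemma width_after_steps_le: "width (n+t) \<le> width n + 2 * (\<Sum>q\<in>{n..<n+t}. noise_bound q)"
proof -
  let ?S = "\<Sum>q\<in>{n..<n+t}. noise_bound q"
  have "zmax (n+t) \<le> zmax n + ?S" unfolding zmax_def[of "n+t"]
    using finite_I I_nonempty range_after_steps(2) by auto
  moreover have "zmin n - ?S \<le> zmin (n+t)" unfolding zmin_def[of "n+t"]
    using finite_I I_nonempty range_after_steps(1) by auto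
  ultimately show ?thesis unfolding width_def by linarith
qed

text \<open>The extreme particles at time \<open>n + m\<close> have shared a weighted mean with a particle of weight
  at least \<open>a\<close>, so the minimum is lifted and the maximum lowered by a fixed fraction of the
  spread at time \<open>n\<close>.\<close>
lemma width_contracts:
  assumes cover: "\<And>i j. i \<in> I \<Longrightarrow> j \<in> I \<Longrightarrow>
      \<exists>k\<in>{n..<n+m}. (\<forall>c\<in>I. W k i c = W k j c) \<and> (\<exists>h\<in>I. a \<le> W k i h)"
    and a: "0 \<le> a"
  shows "width (n+m) \<le> (1 - \<gamma> * a * (1 - \<gamma>)^(m-1)) * width n + 2 * (\<Sum>q\<in>{n..<n+m}. noise_bound q)"
proof -
  define T where "T = n + m"
  define s where "s k = (\<Sum>q\<in>{n..<k}. noise_bound q)" for k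
  have range: "zmin n - s k \<le> z k c" "z k c \<le> zmax n + s k" if "n \<le> k" "c \<in> I" for k c
    using range_after_steps[OF that(2), of n "k - n"] that(1) unfolding s_def by simp_all
  have "zmax T \<in> z T ` I" "zmin T \<in> z T ` I"
    unfolding zmax_def zmin_def using finite_I I_nonempty by simp_all
  then obtain i0 j0 where i0: "i0 \<in> I" "z T i0 = zmax T" and j0: "j0 \<in> I" "z T j0 = zmin T"
    by (metis imageE)
  obtain k0 h where k0: "k0 \<in> {n..<n+m}" and same: "\<forall>c\<in>I. W k0 i0 c = W k0 j0 c"
    and h: "h \<in> I" and heavy: "a \<le> W k0 i0 h"
    using cover[OF i0(1) j0(1)] by blast
  define t where "t = T - Suc k0"
  have T: "Suc k0 + t = T" and t: "t \<le> m - 1" using k0 unfolding t_def T_def by auto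
  define \<tau> where "\<tau> = \<gamma> * a * (1 - \<gamma>)^t"
  have "zmin n - s T + \<tau> * (z k0 h - zmin n) \<le> z T j0"
    unfolding \<tau>_def s_def T[symmetric]
    by (rule lower_bound_lifted[OF noise_term_le])
      (use range k0 j0 h a heavy same in \<open>auto simp: s_def\<close>)
  moreover have "- zmax n - s T + \<tau> * (- z k0 h - - zmax n) \<le> - z T i0"
    unfolding \<tau>_def s_def T[symmetric]
    by (rule noisy_consensus.lower_bound_lifted[OF noisy_consensus_uminus noise_term_le_uminus])
      (use range k0 i0 h a heavy in \<open>force simp: s_def\<close>)+
  ultimately have "width T \<le> (1 - \<tau>) * width n + 2 * s T"
    using i0 j0 unfolding width_def by (simp add: algebra_simps)
  also have "\<dots> \<le> (1 - \<gamma> * a * (1 - \<gamma>)^(m-1)) * width n + 2 * s T"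
  proof -
    have "(1 - \<gamma>)^(m-1) \<le> (1 - \<gamma>)^t" using t \<gamma>_nonneg \<gamma>_le_1 by (intro power_decreasing) auto
    then have "\<gamma> * a * (1 - \<gamma>)^(m-1) \<le> \<tau>" unfolding \<tau>_def using \<gamma>_nonneg a by (simp add: mult_left_mono)
    then show ?thesis using width_nonneg[of n] by (intro add_right_mono mult_right_mono) auto
  qed
  finally show ?thesis unfolding T_def s_def .
qed

end

lemma abs_diff_le_spread:
  assumes "i \<in> {1..N}" and "j \<in> {1..N}"
  shows "\<bar>f i - f j\<bar> \<le> spread N f"
proof -
  have "f i \<le> (MAX k\<in>{1..N}. f k)" "f j \<le> (MAX k\<in>{1..N}. f k)"
    "(MIN k\<in>{1..N}. f k) \<le> f i" "(MIN k\<in>{1..N}. f k) \<le> f j" using assms by auto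
  then show ?thesis unfolding spread_def by linarith
qed

lemma max_abs_diff_le_of_spread_le:
  fixes y :: "nat \<Rightarrow> nat \<Rightarrow> real"
  assumes spread_le: "\<And>l. l \<in> {1..d} \<Longrightarrow> spread N (\<lambda>i. y i l) \<le> c l * t"
    and "1 \<le> d" and "1 \<le> N" and "0 \<le> t"
  shows "(MAX (i, j)\<in>{1..N} \<times> {1..N}. MAX l\<in>{1..d}. \<bar>y i l - y j l\<bar>) \<le> (MAX l\<in>{1..d}. c l) * t"
proof -
  have "\<bar>y i l - y j l\<bar> \<le> (MAX l\<in>{1..d}. c l) * t"
    if "i \<in> {1..N}" "j \<in> {1..N}" "l \<in> {1..d}" for i j l
  proof -
    have "\<bar>y i l - y j l\<bar> \<le> c l * t"
      using abs_diff_le_spread[OF that(1,2), of "\<lambda>i. y i l"] spread_le[OF that(3)] by simp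
    also have "\<dots> \<le> (MAX l\<in>{1..d}. c l) * t" using that(3) assms(4) by (intro mult_right_mono) auto
    finally show ?thesis .
  qed
  then show ?thesis using assms(2,3) by (auto simp: Max_le_iff)
qed

section \<open>Independence and moment bounds\<close>


lemma Int_stable_vimage_sets: "Int_stable {f -` A \<inter> S | A. A \<in> sets N}"
  unfolding Int_stable_def
proof safe
  fix A B assume "A \<in> sets N" "B \<in> sets N"
  then show "\<exists>C. (f -` A \<inter> S) \<inter> (f -` B \<inter> S) = f -` C \<inter> S \<and> C \<in> sets N"
    by (intro exI[of _ "A \<inter> B"]) auto
qed

lemma (in prob_space) nn_integral_mult_indep_bool:
  assumes indep: "indep_sets F (UNIV :: bool set)"
    and f: "f \<in> borel_measurable M" "\<And>A. A \<in> sets borel \<Longrightarrow> f -` A \<inter> space M \<in> F True"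
    and g: "g \<in> borel_measurable M" "\<And>A. A \<in> sets borel \<Longrightarrow> g -` A \<inter> space M \<in> F False"
    and f_nonneg: "\<And>\<omega>. 0 \<le> f \<omega>" and g_nonneg: "\<And>\<omega>. 0 \<le> g \<omega>"
  shows "(\<integral>\<^sup>+\<omega>. ennreal (f \<omega> * g \<omega>) \<partial>M) = (\<integral>\<^sup>+\<omega>. ennreal (f \<omega>) \<partial>M) * (\<integral>\<^sup>+\<omega>. ennreal (g \<omega>) \<partial>M)"
proof -
  define X where "X b = (\<lambda>\<omega>. ennreal (if b then f \<omega> else g \<omega>))" for b
  have "indep_vars (\<lambda>_. borel) X UNIV"
    unfolding indep_vars_def2
  proof
    show "\<forall>b\<in>UNIV. random_variable borel (X b)" using f g by (auto simp: X_def)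
    show "indep_sets (\<lambda>b. {X b -` A \<inter> space M |A. A \<in> sets borel}) UNIV"
    proof (rule indep_sets_mono_sets[OF indep])
      fix b :: bool
      show "{X b -` A \<inter> space M |A. A \<in> sets borel} \<subseteq> F b"
      proof safe
        fix A :: "ennreal set" assume "A \<in> sets borel"
        then have "ennreal -` A \<in> sets borel" using measurable_sets[OF measurable_ennreal] by simp
        then show "X b -` A \<inter> space M \<in> F b"
          using f(2)[of "ennreal -` A"] g(2)[of "ennreal -` A"] unfolding X_def
          by (cases b) (auto simp: vimage_def)
      qed
    qed
  qed
  then have "(\<integral>\<^sup>+\<omega>. (\<Prod>b\<in>UNIV. X b \<omega>) \<partial>M) = (\<Prod>b\<in>UNIV. \<integral>\<^sup>+\<omega>. X b \<omega> \<partial>M)"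
    by (rule indep_vars_nn_integral[rotated]) auto
  then show ?thesis using f_nonneg g_nonneg by (simp add: UNIV_bool X_def mult.commute ennreal_mult)
qed

lemma (in prob_space) nn_integral_mult_indep_sigma:
  assumes indep: "indep_sets F I" and stable: "\<And>i. i \<in> I \<Longrightarrow> Int_stable (F i)"
    and J: "J1 \<subseteq> I" "J2 \<subseteq> I" "J1 \<inter> J2 = {}"
    and f: "f \<in> borel_measurable (sigma (space M) (\<Union>i\<in>J1. F i))" and f_nonneg: "\<And>\<omega>. 0 \<le> f \<omega>"
    and g: "g \<in> borel_measurable (sigma (space M) (\<Union>i\<in>J2. F i))" and g_nonneg: "\<And>\<omega>. 0 \<le> g \<omega>"
  shows "(\<integral>\<^sup>+\<omega>. ennreal (f \<omega> * g \<omega>) \<partial>M) = (\<integral>\<^sup>+\<omega>. ennreal (f \<omega>) \<partial>M) * (\<integral>\<^sup>+\<omega>. ennreal (g \<omega>) \<partial>M)"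
proof -
  define K where "K b = (if b then J1 else J2)" for b
  define G where "G b = sigma (space M) (\<Union>i\<in>K b. F i)" for b
  have K_sub: "K b \<subseteq> I" for b using J unfolding K_def by simp
  have gen_events: "(\<Union>i\<in>K b. F i) \<subseteq> events" for b
    using indep K_sub unfolding indep_sets_def by blast
  then have gen_Pow: "(\<Union>i\<in>K b. F i) \<subseteq> Pow (space M)" for b
    using sets.sets_into_space by blast
  have sets_G: "sets (G b) = sigma_sets (space M) (\<Union>i\<in>K b. F i)" for b
    unfolding G_def using gen_Pow by (rule sets_measure_of)
  have space_G: "space (G b) = space M" for b
    unfolding G_def using gen_Pow by (rule space_measure_of)
  have sub: "subalgebra M (G b)" for b
    unfolding subalgebra_def sets_G space_G using sets.sigma_sets_subset[OF gen_events] by simp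
  have indep_G: "indep_sets (\<lambda>b. sigma_sets (space M) (\<Union>i\<in>K b. F i)) UNIV"
  proof (rule indep_sets_collect_sigma)
    show "indep_sets F (\<Union>b\<in>UNIV. K b)"
      by (rule indep_sets_mono_index[OF _ indep]) (use K_sub in blast)
    show "Int_stable (F i)" if "i \<in> K b" for i b
      using that K_sub stable by blast
    show "disjoint_family_on K UNIV"
      using J(3) unfolding disjoint_family_on_def K_def by auto
  qed
  have f_G: "f \<in> borel_measurable (G True)" and g_G: "g \<in> borel_measurable (G False)"
    using f g unfolding G_def K_def by simp_all
  show ?thesis
  proof (rule nn_integral_mult_indep_bool[OF indep_G])
    show "f \<in> borel_measurable M" by (rule measurable_from_subalg[OF sub f_G])
    show "g \<in> borel_measurable M" by (rule measurable_from_subalg[OF sub g_G])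
    fix A :: "real set" assume "A \<in> sets borel"
    show "f -` A \<inter> space M \<in> sigma_sets (space M) (\<Union>i\<in>K True. F i)"
      using measurable_sets[OF f_G \<open>A \<in> sets borel\<close>] unfolding sets_G space_G .
    show "g -` A \<inter> space M \<in> sigma_sets (space M) (\<Union>i\<in>K False. F i)"
      using measurable_sets[OF g_G \<open>A \<in> sets borel\<close>] unfolding sets_G space_G .
  qed (use f_nonneg g_nonneg in auto)
qed

text \<open>From \<open>2 r \<bar>y\<bar> \<le> y\<^sup>2 + r\<^sup>2\<close>.\<close>
lemma (in prob_space) nn_integral_abs_le_of_second_moment:
  assumes "integrable M (\<lambda>\<omega>. (f \<omega>)\<^sup>2)" and "(\<integral>\<omega>. (f \<omega>)\<^sup>2 \<partial>M) \<le> r\<^sup>2" and "0 < r"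
  shows "(\<integral>\<^sup>+\<omega>. ennreal \<bar>f \<omega>\<bar> \<partial>M) \<le> ennreal r"
proof -
  define h where "h \<omega> = (f \<omega>)\<^sup>2 / (2 * r) + r / 2" for \<omega>
  have abs_le_h: "\<bar>f \<omega>\<bar> \<le> h \<omega>" for \<omega>
  proof -
    have "0 \<le> (\<bar>f \<omega>\<bar> - r)\<^sup>2" by simp
    then show ?thesis unfolding h_def using assms(3) by (simp add: field_simps power2_eq_square)
  qed
  have h_int: "integrable M h" unfolding h_def using assms(1) by simp
  have "(\<integral>\<omega>. h \<omega> \<partial>M) = (\<integral>\<omega>. (f \<omega>)\<^sup>2 \<partial>M) / (2 * r) + r / 2"
    unfolding h_def using assms(1) by (simp add: prob_space)
  also have "\<dots> \<le> r\<^sup>2 / (2 * r) + r / 2"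
    using assms(2,3) by (intro add_right_mono divide_right_mono) auto
  also have "\<dots> = r" using assms(3) by (simp add: power2_eq_square)
  finally have h_le: "(\<integral>\<omega>. h \<omega> \<partial>M) \<le> r" .
  have "(\<integral>\<^sup>+\<omega>. ennreal \<bar>f \<omega>\<bar> \<partial>M) \<le> (\<integral>\<^sup>+\<omega>. ennreal (h \<omega>) \<partial>M)"
    by (intro nn_integral_mono ennreal_leI abs_le_h)
  also have "\<dots> = ennreal (\<integral>\<omega>. h \<omega> \<partial>M)"
    using h_int abs_le_h by (intro nn_integral_eq_integral AE_I2) (auto intro: order_trans[OF abs_ge_zero])
  finally show ?thesis using h_le by (simp add: order_trans ennreal_leI)
qed

lemma AE_bounded_of_summable_nn_integral:
  fixes f :: "nat \<Rightarrow> 'a \<Rightarrow> real"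
  assumes f_meas: "\<And>n. f n \<in> borel_measurable M" and f_nonneg: "\<And>n \<omega>. 0 \<le> f n \<omega>"
    and summable: "summable (\<lambda>n. enn2real (\<integral>\<^sup>+\<omega>. ennreal (f n \<omega>) \<partial>M))"
    and finite: "\<And>n. (\<integral>\<^sup>+\<omega>. ennreal (f n \<omega>) \<partial>M) \<noteq> \<top>"
  shows "\<exists>C\<in>borel_measurable M. (\<forall>\<omega>. 0 \<le> C \<omega>) \<and> (AE \<omega> in M. \<forall>n. f n \<omega> \<le> C \<omega>)"
proof -
  define S where "S \<omega> = (\<Sum>n. ennreal (f n \<omega>))" for \<omega>
  have ennreal_f_meas: "(\<lambda>\<omega>. ennreal (f n \<omega>)) \<in> borel_measurable M" for n
    using measurable_compose[OF f_meas measurable_ennreal] .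
  have S_meas: "S \<in> borel_measurable M"
    unfolding S_def by (rule borel_measurable_suminf_order[OF ennreal_f_meas])
  have "(\<integral>\<^sup>+\<omega>. S \<omega> \<partial>M) = (\<Sum>n. \<integral>\<^sup>+\<omega>. ennreal (f n \<omega>) \<partial>M)"
    unfolding S_def by (rule nn_integral_suminf[OF ennreal_f_meas])
  also have "\<dots> = (\<Sum>n. ennreal (enn2real (\<integral>\<^sup>+\<omega>. ennreal (f n \<omega>) \<partial>M)))"
    using finite by (simp add: ennreal_enn2real_if)
  also have "\<dots> \<noteq> \<top>" by (rule ennreal_suminf_neq_top[OF summable]) simp
  finally have S_finite: "AE \<omega> in M. S \<omega> \<noteq> \<top>"
    using nn_integral_PInf_AE[OF S_meas] by simp
  have "\<forall>n. f n \<omega> \<le> enn2real (S \<omega>)" if "S \<omega> \<noteq> \<top>" for \<omega>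
  proof
    fix n
    have "ennreal (f n \<omega>) \<le> S \<omega>"
      unfolding S_def using sum_le_suminf[OF summableI, of "{n}" "\<lambda>n. ennreal (f n \<omega>)"] by simp
    then have "enn2real (ennreal (f n \<omega>)) \<le> enn2real (S \<omega>)"
      using that by (intro enn2real_mono) (simp_all add: top.not_eq_extremum)
    then show "f n \<omega> \<le> enn2real (S \<omega>)" using f_nonneg by simp
  qed
  then have "AE \<omega> in M. \<forall>n. f n \<omega> \<le> enn2real (S \<omega>)" by (rule eventually_mono[OF S_finite])
  moreover have "(\<lambda>\<omega>. enn2real (S \<omega>)) \<in> borel_measurable M" using S_meas by measurable
  ultimately show ?thesis by (intro bexI[of _ "\<lambda>\<omega>. enn2real (S \<omega>)"]) auto
qed

lemma nn_integral_add_cmult_real: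
  fixes f g :: "'a \<Rightarrow> real"
  assumes "f \<in> borel_measurable M" "g \<in> borel_measurable M"
    and "\<And>\<omega>. 0 \<le> f \<omega>" "\<And>\<omega>. 0 \<le> g \<omega>" "0 \<le> c"
  shows "(\<integral>\<^sup>+\<omega>. ennreal (f \<omega> + c * g \<omega>) \<partial>M)
    = (\<integral>\<^sup>+\<omega>. ennreal (f \<omega>) \<partial>M) + ennreal c * (\<integral>\<^sup>+\<omega>. ennreal (g \<omega>) \<partial>M)"
proof -
  have "(\<integral>\<^sup>+\<omega>. ennreal (f \<omega> + c * g \<omega>) \<partial>M) = (\<integral>\<^sup>+\<omega>. ennreal (f \<omega>) + ennreal c * ennreal (g \<omega>) \<partial>M)"
    using assms(3-5) by (intro nn_integral_cong) (simp add: ennreal_mult ennreal_plus)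
  also have "\<dots> = (\<integral>\<^sup>+\<omega>. ennreal (f \<omega>) \<partial>M) + ennreal c * (\<integral>\<^sup>+\<omega>. ennreal (g \<omega>) \<partial>M)"
    using assms(1,2) by (simp add: nn_integral_add nn_integral_cmult)
  finally show ?thesis .
qed

section \<open>Linear recursive inequalities\<close>


lemma power_growth_le_pow2:
  fixes \<alpha> :: "nat \<Rightarrow> real"
  assumes nonneg: "\<And>n. 0 \<le> \<alpha> n" and \<kappa>: "0 \<le> \<kappa>" "2 * \<kappa> \<le> 1"
    and grow: "\<And>n. \<alpha> (Suc n) \<le> (1 + 2 * \<kappa>) * \<alpha> n" and k: "k \<le> m"
  shows "\<alpha> (n + k) \<le> 2^m * \<alpha> n"
proof -
  have "\<alpha> (n + k) \<le> (1 + 2 * \<kappa>)^k * \<alpha> n"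
  proof (induction k)
    case (Suc k)
    have "\<alpha> (n + Suc k) \<le> (1 + 2 * \<kappa>) * \<alpha> (n + k)" using grow by simp
    also have "\<dots> \<le> (1 + 2 * \<kappa>) * ((1 + 2 * \<kappa>)^k * \<alpha> n)"
      using Suc \<kappa> by (intro mult_left_mono) auto
    finally show ?case by (simp add: algebra_simps)
  qed simp
  also have "\<dots> \<le> 2^m * \<alpha> n"
  proof (intro mult_right_mono nonneg)
    have "(1 + 2 * \<kappa>)^k \<le> 2^k" using \<kappa> by (intro power_mono) auto
    also have "(2::real)^k \<le> 2^m" using k by (intro power_increasing) auto
    finally show "(1 + 2 * \<kappa>)^k \<le> 2^m" .
  qed
  finally show ?thesis .
qed

lemma periodic_contraction_of_recursions:
  fixes \<alpha> :: "nat \<Rightarrow> real"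
  assumes nonneg: "\<And>n. 0 \<le> \<alpha> n" and \<kappa>: "0 \<le> \<kappa>" "4 * real m * 2^m * \<kappa> \<le> c" and c: "c \<le> 1"
    and grow: "\<And>n. \<alpha> (Suc n) \<le> (1 + 2 * \<kappa>) * \<alpha> n"
    and contract: "\<And>n. \<alpha> (n + m) + c * \<alpha> n \<le> \<alpha> n + 2 * \<kappa> * (\<Sum>q\<in>{n..<n+m}. \<alpha> q)"
  shows "\<alpha> (n + m) \<le> (1 - c / 2) * \<alpha> n"
proof (cases "m = 0")
  case True
  then show ?thesis using contract[of n] c nonneg[of n] by (simp add: algebra_simps mult_left_le)
next
  case False
  have "2 * \<kappa> \<le> 4 * real m * 2^m * \<kappa>"
  proof -
    have "1 * 1 \<le> real m * 2^m" using False by (intro mult_mono) auto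
    then have "(2::real) \<le> 4 * real m * 2^m" by simp
    then show ?thesis using \<kappa>(1) by (simp add: mult_right_mono)
  qed
  then have \<kappa>_half: "2 * \<kappa> \<le> 1" using \<kappa>(2) c by linarith
  have "(\<Sum>q\<in>{n..<n+m}. \<alpha> q) \<le> (\<Sum>q\<in>{n..<n+m}. 2^m * \<alpha> n)"
  proof (rule sum_mono)
    fix q assume "q \<in> {n..<n+m}"
    then show "\<alpha> q \<le> 2^m * \<alpha> n"
      using power_growth_le_pow2[where \<alpha>=\<alpha>, OF nonneg \<kappa>(1) \<kappa>_half grow, of "q - n" m n] by fastforce
  qed
  then have "2 * \<kappa> * (\<Sum>q\<in>{n..<n+m}. \<alpha> q) \<le> 2 * \<kappa> * (real m * 2^m * \<alpha> n)"
    using \<kappa>(1) by (intro mult_left_mono) auto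
  also have "\<dots> \<le> c / 2 * \<alpha> n"
    using mult_right_mono[OF \<kappa>(2) nonneg[of n]] by (simp add: algebra_simps)
  finally show ?thesis using contract[of n] by (simp add: algebra_simps)
qed

lemma exp_decay_of_periodic_contraction:
  fixes \<alpha> :: "nat \<Rightarrow> real"
  assumes m: "0 < m" and \<rho>: "0 < \<rho>" "\<rho> < 1"
    and contract: "\<And>n. \<alpha> (n + m) \<le> \<rho> * \<alpha> n" and init: "\<And>k. k < m \<Longrightarrow> \<alpha> k \<le> A" and A: "0 \<le> A"
  shows "\<alpha> n \<le> A / \<rho> * exp (ln \<rho> / real m * real n)"
proof (induction n rule: less_induct)
  case (less n)
  show ?case
  proof (cases "n < m")
    case True
    have "ln \<rho> \<le> ln \<rho> / real m * real n"
      using True \<rho> by (simp add: field_simps mult_left_mono_neg)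
    then have "\<rho> \<le> exp (ln \<rho> / real m * real n)" using \<rho> by (metis exp_le_cancel_iff exp_ln)
    then have "A * \<rho> \<le> A * exp (ln \<rho> / real m * real n)" using A by (rule mult_left_mono)
    then have "A \<le> A / \<rho> * exp (ln \<rho> / real m * real n)" using \<rho> by (simp add: field_simps)
    then show ?thesis using init[OF True] by linarith
  next
    case False
    then obtain n' where n: "n = n' + m" by (metis add.commute le_Suc_ex not_less)
    have "ln \<rho> / real m * real n = ln \<rho> + ln \<rho> / real m * real n'"
      using m unfolding n by (simp add: field_simps)
    then have "A / \<rho> * exp (ln \<rho> / real m * real n) = \<rho> * (A / \<rho> * exp (ln \<rho> / real m * real n'))"
      using \<rho> by (simp add: exp_add)
    moreover have "\<alpha> n \<le> \<rho> * \<alpha> n'" unfolding n by (rule contract)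
    moreover have "\<rho> * \<alpha> n' \<le> \<rho> * (A / \<rho> * exp (ln \<rho> / real m * real n'))"
      using less.IH[of n'] m \<rho> unfolding n by (intro mult_left_mono) auto
    ultimately show ?thesis by linarith
  qed
qed

lemma summable_exp_weighted_of_periodic_contraction:
  fixes \<alpha> :: "nat \<Rightarrow> real"
  assumes nonneg: "\<And>n. 0 \<le> \<alpha> n" and m: "0 < m" and \<rho>: "0 < \<rho>" "\<rho> < 1"
    and contract: "\<And>n. \<alpha> (n + m) \<le> \<rho> * \<alpha> n" and init: "\<And>k. k < m \<Longrightarrow> \<alpha> k \<le> A"
  shows "summable (\<lambda>n. \<alpha> n * exp (- ln \<rho> / (2 * real m) * real n))"
proof (rule summable_comparison_test')
  define q where "q = exp (ln \<rho> / (2 * real m))"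
  have q: "0 < q" "q < 1" unfolding q_def using \<rho> m by (simp_all add: divide_neg_pos)
  show "summable (\<lambda>n. A / \<rho> * q ^ n)" using q by (intro summable_mult summable_geometric) auto
  have A: "0 \<le> A" using init[OF m] nonneg[of 0] by linarith
  fix n
  have "\<alpha> n * exp (- ln \<rho> / (2 * real m) * real n)
      \<le> A / \<rho> * exp (ln \<rho> / real m * real n) * exp (- ln \<rho> / (2 * real m) * real n)"
    by (intro mult_right_mono exp_decay_of_periodic_contraction[where \<alpha>=\<alpha>, OF m \<rho> contract init A]) auto
  also have "\<dots> = A / \<rho> * q ^ n"
    unfolding q_def exp_of_nat_mult[symmetric] using m by (simp add: mult.assoc exp_add[symmetric] field_simps)
  finally show "norm (\<alpha> n * exp (- ln \<rho> / (2 * real m) * real n)) \<le> A / \<rho> * q ^ n"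
    using nonneg[of n] by simp
qed

section \<open>Batch partitions and rates\<close>


lemma batch_partitions_subset_Pow: "Q \<in> batch_partitions N P \<Longrightarrow> Q \<subseteq> Pow {1..N}"
  unfolding batch_partitions_def using partition_onD1 by fastforce

lemma finite_batch_partitions: "finite (batch_partitions N P)"
proof -
  have "batch_partitions N P \<subseteq> Pow (Pow {1..N})" using batch_partitions_subset_Pow by blast
  then show ?thesis by (rule finite_subset) auto
qed

lemma blk_eqI:
  assumes "Q \<in> batch_partitions N P" and "S \<in> Q" and "i \<in> S"
  shows "blk Q i = S"
  unfolding blk_def
proof (rule the_equality)
  show "S \<in> Q \<and> i \<in> S" using assms by auto
  fix S' assume "S' \<in> Q \<and> i \<in> S'"
  moreover have "disjoint Q"
    using assms(1) unfolding batch_partitions_def by (auto dest: partition_onD2)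
  ultimately show "S' = S" using assms disjointD[of Q S' S] by blast
qed

lemma blk_props:
  assumes Q: "Q \<in> batch_partitions N P" and i: "i \<in> {1..N}"
  shows "blk Q i \<in> Q" "i \<in> blk Q i" "blk Q i \<subseteq> {1..N}" "finite (blk Q i)" "card (blk Q i) \<le> P"
proof -
  have "\<Union>Q = {1..N}" using Q unfolding batch_partitions_def by (auto dest: partition_onD1)
  then obtain S where "S \<in> Q" "i \<in> S" using i by blast
  then show blk: "blk Q i \<in> Q" "i \<in> blk Q i" using blk_eqI[OF Q] by auto
  then show "blk Q i \<subseteq> {1..N}" "finite (blk Q i)" "card (blk Q i) \<le> P"
    using batch_partitions_subset_Pow[OF Q] Q unfolding batch_partitions_def
    by (auto intro: finite_subset)
qed

lemma measurable_stateM_component: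
  assumes "g \<in> measurable F (stateM N d)" and "i \<in> {1..N}" and "l \<in> {1..d}"
  shows "(\<lambda>\<omega>. g \<omega> i l) \<in> borel_measurable F"
proof -
  have "(\<lambda>\<omega>. g \<omega> i) \<in> measurable F (\<Pi>\<^sub>M l\<in>{1..d}. (borel :: real measure))"
    using measurable_compose[OF assms(1)[unfolded stateM_def] measurable_component_singleton[OF assms(2)]] .
  then show ?thesis using measurable_compose[OF _ measurable_component_singleton[OF assms(3)]] by blast
qed

lemma measurable_arr:
  assumes "\<And>i l. i \<in> {1..N} \<Longrightarrow> l \<in> {1..d} \<Longrightarrow> y i l \<in> borel_measurable F"
  shows "arr N d y \<in> measurable F (stateM N d)"
  unfolding arr_def stateM_def by (intro measurable_restrict) (use assms in auto)

lemma arr_in_space: "arr N d y \<omega> \<in> space (stateM N d)"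
  unfolding arr_def stateM_def by (simp add: space_PiM)

definition contraction_rate :: "nat \<Rightarrow> real \<Rightarrow> nat \<Rightarrow> real" where
  "contraction_rate P \<gamma> m0 = \<gamma> / real P * (1 - \<gamma>)^(m0 - 1)"

text \<open>The probability that \<open>m0\<close> consecutive batches are a prescribed sequence of partitions.\<close>
definition covering_prob :: "nat \<Rightarrow> nat \<Rightarrow> nat \<Rightarrow> real" where
  "covering_prob N P m0 = (1 / real (card (batch_partitions N P)))^m0"

text \<open>Below this noise level the expected one-step growth factor \<open>1 + 2 N \<zeta>\<close> is small enough
  for the expected \<open>m0\<close>-step contraction by \<open>contraction_rate * covering_prob\<close> to win, as
  required by \<open>periodic_contraction_of_recursions\<close>.\<close>
definition noise_threshold :: "nat \<Rightarrow> nat \<Rightarrow> real \<Rightarrow> nat \<Rightarrow> real" where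
  "noise_threshold N P \<gamma> m0 =
     contraction_rate P \<gamma> m0 * covering_prob N P m0 / (4 * real N * real m0 * 2^m0)"

text \<open>Half the exponential rate of an \<open>m0\<close>-step contraction by the factor
  \<open>1 - contraction_rate * covering_prob / 2\<close>; the other half is spent on summability.\<close>
definition decay_rate :: "nat \<Rightarrow> nat \<Rightarrow> real \<Rightarrow> nat \<Rightarrow> real" where
  "decay_rate N P \<gamma> m0 = - ln (1 - contraction_rate P \<gamma> m0 * covering_prob N P m0 / 2) / (2 * real m0)"

lemma contraction_rate_pos_le_1:
  assumes "0 < \<gamma>" "\<gamma> < 1" "1 \<le> P"
  shows "0 < contraction_rate P \<gamma> m0" "contraction_rate P \<gamma> m0 \<le> 1"
proof -
  have "0 < (1 - \<gamma>)^(m0 - 1)" "(1 - \<gamma>)^(m0 - 1) \<le> 1" using assms(1,2) by (auto intro: power_le_one)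
  moreover have "0 < \<gamma> / real P" "\<gamma> / real P \<le> 1" using assms by auto
  ultimately show "0 < contraction_rate P \<gamma> m0" "contraction_rate P \<gamma> m0 \<le> 1"
    unfolding contraction_rate_def
    using mult_pos_pos[of "\<gamma> / real P" "(1 - \<gamma>)^(m0 - 1)"] mult_le_one[of "\<gamma> / real P" "(1 - \<gamma>)^(m0 - 1)"]
    by auto
qed

lemma covering_prob_pos_le_1:
  assumes "batch_partitions N P \<noteq> {}"
  shows "0 < covering_prob N P m0" "covering_prob N P m0 \<le> 1"
proof -
  have "1 \<le> card (batch_partitions N P)"
    using assms finite_batch_partitions by (simp add: Suc_le_eq card_gt_0_iff)
  then show "0 < covering_prob N P m0" "covering_prob N P m0 \<le> 1"
    unfolding covering_prob_def by (auto intro: power_le_one)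
qed

lemma noise_threshold_pos:
  assumes "0 < \<gamma>" "\<gamma> < 1" "1 \<le> P" "batch_partitions N P \<noteq> {}" "0 < N" "0 < m0"
  shows "0 < noise_threshold N P \<gamma> m0"
  unfolding noise_threshold_def
  using contraction_rate_pos_le_1(1)[OF assms(1-3)] covering_prob_pos_le_1(1)[OF assms(4)] assms(5,6)
  by simp

lemma decay_rate_pos:
  assumes "0 < \<gamma>" "\<gamma> < 1" "1 \<le> P" "batch_partitions N P \<noteq> {}" "0 < m0"
  shows "0 < decay_rate N P \<gamma> m0"
proof -
  have "0 < contraction_rate P \<gamma> m0 * covering_prob N P m0" "contraction_rate P \<gamma> m0 * covering_prob N P m0 \<le> 1"
    using contraction_rate_pos_le_1[OF assms(1-3), of m0] covering_prob_pos_le_1[OF assms(4), of m0]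
      mult_le_one[of "contraction_rate P \<gamma> m0" "covering_prob N P m0"]
    by auto
  then have "ln (1 - contraction_rate P \<gamma> m0 * covering_prob N P m0 / 2) < 0" by simp
  then show ?thesis unfolding decay_rate_def using assms(5) by (simp add: divide_neg_pos)
qed

section \<open>The random batch model\<close>

locale rbcbo_covering =
  fixes N P :: nat and \<gamma> \<zeta> :: real and d :: nat and w and M :: "'a measure" and B \<eta> X0 x
    and m0 :: nat and Ps :: "nat \<Rightarrow> nat set set"
  assumes model: "rbcbo_model N P \<gamma> \<zeta> d w M B \<eta> X0 x"
    and N_ge_2: "2 \<le> N" and P_ge_2: "2 \<le> P" and \<gamma>_pos: "0 < \<gamma>" and \<gamma>_less_1: "\<gamma> < 1"
    and m0_pos: "0 < m0" and Ps: "\<And>k. k \<in> {1..m0} \<Longrightarrow> Ps k \<in> batch_partitions N P"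
    and covering: "\<And>i j. i \<in> {1..N} \<Longrightarrow> j \<in> {1..N} \<Longrightarrow> \<exists>k\<in>{1..m0}. \<exists>S\<in>Ps k. i \<in> S \<and> j \<in> S"
begin

sublocale prob_space M using model unfolding rbcbo_model_def by auto

lemma weights_measurable:
  "S \<noteq> {} \<Longrightarrow> S \<subseteq> {1..N} \<Longrightarrow> j \<in> {1..N} \<Longrightarrow> w S j \<in> borel_measurable (stateM N d)"
  and weights_props: "S \<noteq> {} \<Longrightarrow> S \<subseteq> {1..N} \<Longrightarrow> X \<in> space (stateM N d) \<Longrightarrow>
   (\<forall>j\<in>{1..N}. 0 \<le> w S j X) \<and> (\<forall>j\<in>{1..N}. j \<notin> S \<longrightarrow> w S j X = 0) \<and> (\<Sum>j\<in>S. w S j X) = 1"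
  using conjunct1[OF conjunct2[OF model[unfolded rbcbo_model_def]]]
  unfolding admissible_weights_def by blast+

lemma B_measurable: "B n \<in> measurable M (count_space UNIV)"
  and B_in_batch_partitions: "\<omega> \<in> space M \<Longrightarrow> B n \<omega> \<in> batch_partitions N P"
  and prob_B_eq: "Q \<in> batch_partitions N P \<Longrightarrow>
     measure M {\<omega>\<in>space M. B n \<omega> = Q} = 1 / real (card (batch_partitions N P))"
  and X0_measurable: "arr N d X0 \<in> measurable M (stateM N d)"
  and \<eta>_measurable: "arr N d (\<eta> n) \<in> measurable M (stateM N d)"
  and \<eta>_square_integrable: "i \<in> {1..N} \<Longrightarrow> l \<in> {1..d} \<Longrightarrow> integrable M (\<lambda>\<omega>. (\<eta> n i l \<omega>)\<^sup>2)"
  and \<eta>_second_moment: "i \<in> {1..N} \<Longrightarrow> l \<in> {1..d} \<Longrightarrow> (\<integral>\<omega>. (\<eta> n i l \<omega>)\<^sup>2 \<partial>M) \<le> \<zeta>\<^sup>2"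
  and x_0: "\<omega> \<in> space M \<Longrightarrow> i \<in> {1..N} \<Longrightarrow> l \<in> {1..d} \<Longrightarrow> x 0 i l \<omega> = X0 i l \<omega>"
  and x_Suc: "\<omega> \<in> space M \<Longrightarrow> i \<in> {1..N} \<Longrightarrow> l \<in> {1..d} \<Longrightarrow>
   x (Suc n) i l \<omega> = x n i l \<omega> - \<gamma> * (x n i l \<omega> - (\<Sum>j\<in>{1..N}. w (blk (B n \<omega>) i) j (arr N d (x n) \<omega>) * x n j l \<omega>))
       - (x n i l \<omega> - (\<Sum>j\<in>{1..N}. w (blk (B n \<omega>) i) j (arr N d (x n) \<omega>) * x n j l \<omega>)) * \<eta> n i l \<omega>"
  using model unfolding rbcbo_model_def Let_def by auto

lemma batch_partitions_nonempty: "batch_partitions N P \<noteq> {}"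
  using Ps[of 1] m0_pos by auto

definition generator :: "rv_index \<Rightarrow> 'a set set" where
  "generator = (\<lambda>k. case k of
         Init \<Rightarrow> {arr N d X0 -` A \<inter> space M | A. A \<in> sets (stateM N d)}
       | Batch n \<Rightarrow> {B n -` A \<inter> space M | A. A \<in> sets (count_space UNIV)}
       | Noise n \<Rightarrow> {arr N d (\<eta> n) -` A \<inter> space M | A. A \<in> sets (stateM N d)})"

definition generated :: "rv_index set \<Rightarrow> 'a measure" where
  "generated J = sigma (space M) (\<Union>k\<in>J. generator k)"

definition past :: "nat \<Rightarrow> rv_index set" where
  "past n = insert Init (Batch ` {..<n} \<union> Noise ` {..<n})"

lemma indep_generator: "indep_sets generator UNIV"
  using model unfolding rbcbo_model_def generator_def by auto

lemma Int_stable_generator: "Int_stable (generator k)"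
  unfolding generator_def
  by (cases k) (simp_all add: Int_stable_vimage_sets Int_stable_vimage_sets[of _ _ "count_space UNIV", simplified])

lemma generator_sets: "generator k \<subseteq> sets M"
  unfolding generator_def using B_measurable X0_measurable \<eta>_measurable
  by (auto split: rv_index.splits)

lemma generator_Pow: "generator k \<subseteq> Pow (space M)"
  unfolding generator_def by (auto split: rv_index.splits)

lemma space_generated [simp]: "space (generated J) = space M"
  unfolding generated_def using generator_Pow by (auto intro!: space_measure_of)

lemma sets_generated: "sets (generated J) = sigma_sets (space M) (\<Union>k\<in>J. generator k)"
  unfolding generated_def using generator_Pow by (auto intro!: sets_measure_of)

lemma subalgebra_generated: "subalgebra M (generated J)"
  unfolding subalgebra_def sets_generated using generator_sets by (auto intro!: sets.sigma_sets_subset)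

lemma measurable_generatedI:
  assumes "f \<in> measurable M N'" and "k \<in> J" and "\<And>A. A \<in> sets N' \<Longrightarrow> f -` A \<inter> space M \<in> generator k"
  shows "f \<in> measurable (generated J) N'"
  using assms measurable_space[OF assms(1)] unfolding measurable_def sets_generated by auto

lemma X0_measurable_generated:
  assumes "Init \<in> J" shows "arr N d X0 \<in> measurable (generated J) (stateM N d)"
  by (rule measurable_generatedI[OF X0_measurable assms]) (unfold generator_def rv_index.case, blast)

lemma B_measurable_generated:
  assumes "Batch n \<in> J" shows "B n \<in> measurable (generated J) (count_space UNIV)"
  by (rule measurable_generatedI[OF B_measurable assms]) (unfold generator_def rv_index.case, blast)

lemma \<eta>_measurable_generated:
  assumes "Noise n \<in> J" and "i \<in> {1..N}" and "l \<in> {1..d}"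
  shows "\<eta> n i l \<in> borel_measurable (generated J)"
proof -
  have "arr N d (\<eta> n) \<in> measurable (generated J) (stateM N d)"
    by (rule measurable_generatedI[OF \<eta>_measurable assms(1)]) (unfold generator_def rv_index.case, blast)
  from measurable_stateM_component[OF this assms(2,3)] show ?thesis
    using assms(2,3) by (simp add: arr_def)
qed

lemma x_measurable_past:
  "past n \<subseteq> J \<Longrightarrow> i \<in> {1..N} \<Longrightarrow> l \<in> {1..d} \<Longrightarrow> x n i l \<in> borel_measurable (generated J)"
proof (induction n arbitrary: i l)
  case 0
  have "Init \<in> J" using 0(1) by (simp add: past_def)
  then have "(\<lambda>\<omega>. arr N d X0 \<omega> i l) \<in> borel_measurable (generated J)"
    by (rule measurable_stateM_component[OF X0_measurable_generated 0(2,3)])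
  moreover have "arr N d X0 \<omega> i l = x 0 i l \<omega>" if "\<omega> \<in> space (generated J)" for \<omega>
    using x_0 0 that by (simp add: arr_def)
  ultimately show ?case by (rule measurable_cong[THEN iffD1, rotated])
next
  case (Suc n)
  have past: "past n \<subseteq> J" "Batch n \<in> J" "Noise n \<in> J" using Suc.prems(1) by (auto simp: past_def)
  have x_meas: "x n j l \<in> borel_measurable (generated J)" if "j \<in> {1..N}" for j
    using Suc.IH[OF past(1) that Suc.prems(3)] .
  have state: "arr N d (x n) \<in> measurable (generated J) (stateM N d)"
    by (rule measurable_arr) (use Suc.IH past in auto)
  define f where "f Q \<omega> = x n i l \<omega> - \<gamma> * (x n i l \<omega> - (\<Sum>j\<in>{1..N}. w (blk Q i) j (arr N d (x n) \<omega>) * x n j l \<omega>))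
       - (x n i l \<omega> - (\<Sum>j\<in>{1..N}. w (blk Q i) j (arr N d (x n) \<omega>) * x n j l \<omega>)) * \<eta> n i l \<omega>" for Q \<omega>
  have f_meas: "f Q \<in> borel_measurable (generated J)" if Q: "Q \<in> batch_partitions N P" for Q
  proof -
    have "(\<lambda>\<omega>. w (blk Q i) j (arr N d (x n) \<omega>)) \<in> borel_measurable (generated J)" if "j \<in> {1..N}" for j
      using blk_props[OF Q Suc.prems(2)] that
      by (intro measurable_compose[OF state weights_measurable]) auto
    then have "(\<lambda>\<omega>. \<Sum>j\<in>{1..N}. w (blk Q i) j (arr N d (x n) \<omega>) * x n j l \<omega>) \<in> borel_measurable (generated J)"
      using x_meas by (intro borel_measurable_sum borel_measurable_times) auto
    then show ?thesis unfolding f_def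
      using x_meas[OF Suc.prems(2)] \<eta>_measurable_generated[OF past(3) Suc.prems(2,3)]
      by (intro borel_measurable_diff borel_measurable_times borel_measurable_const)
  qed
  have B_meas: "B n \<in> measurable (generated J) (count_space (batch_partitions N P))"
    unfolding measurable_count_space_eq2[OF finite_batch_partitions]
    using B_in_batch_partitions measurable_sets[OF B_measurable_generated[OF past(2)]] by auto
  have "(\<lambda>\<omega>. f (B n \<omega>) \<omega>) \<in> borel_measurable (generated J)"
    by (rule measurable_compose_countable'[OF f_meas B_meas])
      (simp_all add: countable_finite finite_batch_partitions)
  moreover have "f (B n \<omega>) \<omega> = x (Suc n) i l \<omega>" if "\<omega> \<in> space (generated J)" for \<omega>
    using x_Suc[of \<omega> i l n] Suc.prems that unfolding f_def by simp
  ultimately show ?case by (rule measurable_cong[THEN iffD1, rotated])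
qed

lemma nn_integral_mult_indep:
  assumes "J1 \<inter> J2 = {}" and "f \<in> borel_measurable (generated J1)" and "g \<in> borel_measurable (generated J2)"
    and "\<And>\<omega>. 0 \<le> f \<omega>" and "\<And>\<omega>. 0 \<le> g \<omega>"
  shows "(\<integral>\<^sup>+\<omega>. ennreal (f \<omega> * g \<omega>) \<partial>M) = (\<integral>\<^sup>+\<omega>. ennreal (f \<omega>) \<partial>M) * (\<integral>\<^sup>+\<omega>. ennreal (g \<omega>) \<partial>M)"
  using assms unfolding generated_def
  by (intro nn_integral_mult_indep_sigma[OF indep_generator Int_stable_generator]) auto


definition coord_spread :: "nat \<Rightarrow> nat \<Rightarrow> 'a \<Rightarrow> real" where
  "coord_spread l n \<omega> = spread N (\<lambda>i. x n i l \<omega>)"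

definition noise_mass :: "nat \<Rightarrow> nat \<Rightarrow> 'a \<Rightarrow> real" where
  "noise_mass l n \<omega> = (\<Sum>i\<in>{1..N}. \<bar>\<eta> n i l \<omega>\<bar>)"

text \<open>Dividing by one plus the initial spread makes the spread integrable without any moment
  assumption on the initial data.\<close>
definition rel_spread :: "nat \<Rightarrow> nat \<Rightarrow> 'a \<Rightarrow> real" where
  "rel_spread l n \<omega> = coord_spread l n \<omega> / (1 + coord_spread l 0 \<omega>)"

definition covering_event :: "nat \<Rightarrow> 'a set" where
  "covering_event n = {\<omega>\<in>space M. \<forall>k<m0. B (n + k) \<omega> = Ps (Suc k)}"

definition batch_weights :: "'a \<Rightarrow> nat \<Rightarrow> nat \<Rightarrow> nat \<Rightarrow> real" where
  "batch_weights \<omega> k i c = w (blk (B k \<omega>) i) c (arr N d (x k) \<omega>)"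

lemma noisy_consensus_path:
  assumes \<omega>: "\<omega> \<in> space M" and l: "l \<in> {1..d}"
  shows "noisy_consensus {1..N} (\<lambda>k i. x k i l \<omega>) (batch_weights \<omega>) (\<lambda>k i. \<eta> k i l \<omega>) \<gamma>"
proof
  show "finite {1..N}" "{1..N} \<noteq> {}" "0 \<le> \<gamma>" "\<gamma> \<le> 1" using N_ge_2 \<gamma>_pos \<gamma>_less_1 by auto
  fix k i assume i: "i \<in> {1..N}"
  note blk = blk_props[OF B_in_batch_partitions[OF \<omega>] i, of k]
  have "blk (B k \<omega>) i \<noteq> {}" using blk(2) by blast
  note weights = weights_props[OF this blk(3) arr_in_space[of N d "x k" \<omega>]]
  show "0 \<le> batch_weights \<omega> k i c" if "c \<in> {1..N}" for c
    using weights blk that unfolding batch_weights_def by auto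
  have "(\<Sum>c\<in>{1..N}. batch_weights \<omega> k i c) = (\<Sum>c\<in>blk (B k \<omega>) i. batch_weights \<omega> k i c)"
    by (rule sum.mono_neutral_right) (use blk weights in \<open>auto simp: batch_weights_def\<close>)
  then show "(\<Sum>c\<in>{1..N}. batch_weights \<omega> k i c) = 1"
    using weights blk unfolding batch_weights_def by auto
  show "x (Suc k) i l \<omega> = x k i l \<omega> - \<gamma> * (x k i l \<omega> - (\<Sum>c\<in>{1..N}. batch_weights \<omega> k i c * x k c l \<omega>)) -
        (x k i l \<omega> - (\<Sum>c\<in>{1..N}. batch_weights \<omega> k i c * x k c l \<omega>)) * \<eta> k i l \<omega>"
    using x_Suc[OF \<omega> i l] unfolding batch_weights_def .
qed

lemma path_width_noise_bound:
  assumes "\<omega> \<in> space M" and "l \<in> {1..d}"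
  shows "noisy_consensus.width {1..N} (\<lambda>k i. x k i l \<omega>) = (\<lambda>k. coord_spread l k \<omega>)"
    and "noisy_consensus.noise_bound {1..N} (\<lambda>k i. x k i l \<omega>) (\<lambda>k i. \<eta> k i l \<omega>)
      = (\<lambda>k. noise_mass l k \<omega> * coord_spread l k \<omega>)"
  using noisy_consensus_path[OF assms]
  by (simp_all add: fun_eq_iff noisy_consensus.width_def noisy_consensus.zmax_def noisy_consensus.zmin_def
      noisy_consensus.noise_bound_def coord_spread_def spread_def noise_mass_def)

lemma coord_spread_nonneg: "0 \<le> coord_spread l n \<omega>"
proof -
  have "x n 1 l \<omega> \<le> (MAX i\<in>{1..N}. x n i l \<omega>)" "(MIN i\<in>{1..N}. x n i l \<omega>) \<le> x n 1 l \<omega>"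
    using N_ge_2 by auto
  then show ?thesis unfolding coord_spread_def spread_def by linarith
qed

lemma noise_mass_nonneg: "0 \<le> noise_mass l n \<omega>"
  unfolding noise_mass_def by (simp add: sum_nonneg)

lemma rel_spread_nonneg: "0 \<le> rel_spread l n \<omega>"
  unfolding rel_spread_def using coord_spread_nonneg by simp

lemma rel_spread_0_le_1: "rel_spread l 0 \<omega> \<le> 1"
  unfolding rel_spread_def using coord_spread_nonneg[of l 0 \<omega>] by simp

lemma coord_spread_Suc_le:
  assumes "\<omega> \<in> space M" and "l \<in> {1..d}"
  shows "coord_spread l (Suc n) \<omega> \<le> coord_spread l n \<omega> + 2 * (noise_mass l n \<omega> * coord_spread l n \<omega>)"
  using noisy_consensus.width_after_steps_le[OF noisy_consensus_path[OF assms], of n 1]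
  unfolding path_width_noise_bound[OF assms] by simp

lemma covering_event_covers:
  assumes \<omega>: "\<omega> \<in> covering_event n" and i: "i \<in> {1..N}" and j: "j \<in> {1..N}"
  shows "\<exists>k\<in>{n..<n+m0}. (\<forall>c\<in>{1..N}. batch_weights \<omega> k i c = batch_weights \<omega> k j c)
    \<and> (\<exists>h\<in>{1..N}. 1 / real P \<le> batch_weights \<omega> k i h)"
proof -
  obtain k' S where k': "k' \<in> {1..m0}" and S: "S \<in> Ps k'" "i \<in> S" "j \<in> S"
    using covering[OF i j] by blast
  define k where "k = n + (k' - 1)"
  have B_k: "B k \<omega> = Ps k'" and space: "\<omega> \<in> space M"
    using \<omega> k' unfolding covering_event_def k_def by (auto dest: spec[of _ "k' - 1"])
  have Q: "B k \<omega> \<in> batch_partitions N P" using Ps[OF k'] B_k by simp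
  have same_batch: "blk (B k \<omega>) i = blk (B k \<omega>) j" using blk_eqI[OF Q] S B_k by auto
  note blk = blk_props[OF Q i]
  note weights = weights_props[OF _ blk(3) arr_in_space[of N d "x k" \<omega>]]
  obtain h where "h \<in> blk (B k \<omega>) i" "1 / real P \<le> batch_weights \<omega> k i h"
    using ex_weight_ge_inverse_card[OF blk(4) _ blk(5), of "\<lambda>c. batch_weights \<omega> k i c"] blk weights
    unfolding batch_weights_def by auto
  moreover have "k \<in> {n..<n+m0}" using k' unfolding k_def by auto
  moreover have "\<forall>c\<in>{1..N}. batch_weights \<omega> k i c = batch_weights \<omega> k j c"
    unfolding batch_weights_def using same_batch by simp
  ultimately show ?thesis using blk(3) by blast
qed

lemma coord_spread_contracts:
  assumes "\<omega> \<in> space M" and "l \<in> {1..d}"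
  shows "coord_spread l (n + m0) \<omega> + contraction_rate P \<gamma> m0 * indicator (covering_event n) \<omega> * coord_spread l n \<omega>
    \<le> coord_spread l n \<omega> + 2 * (\<Sum>q\<in>{n..<n+m0}. noise_mass l q \<omega> * coord_spread l q \<omega>)"
proof (cases "\<omega> \<in> covering_event n")
  case False
  then show ?thesis using noisy_consensus.width_after_steps_le[OF noisy_consensus_path[OF assms], of n m0]
    unfolding path_width_noise_bound[OF assms] by simp
next
  case True
  have "coord_spread l (n + m0) \<omega>
    \<le> (1 - contraction_rate P \<gamma> m0) * coord_spread l n \<omega> + 2 * (\<Sum>q\<in>{n..<n+m0}. noise_mass l q \<omega> * coord_spread l q \<omega>)"
    using noisy_consensus.width_contracts[OF noisy_consensus_path[OF assms] covering_event_covers[OF True]]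
    unfolding path_width_noise_bound[OF assms] contraction_rate_def by simp
  then show ?thesis using True by (simp add: algebra_simps)
qed

lemma rel_spread_Suc_le:
  assumes "\<omega> \<in> space M" and "l \<in> {1..d}"
  shows "rel_spread l (Suc n) \<omega> \<le> rel_spread l n \<omega> + 2 * (noise_mass l n \<omega> * rel_spread l n \<omega>)"
  using divide_right_mono[OF coord_spread_Suc_le[OF assms, of n], of "1 + coord_spread l 0 \<omega>"]
    coord_spread_nonneg[of l 0 \<omega>]
  unfolding rel_spread_def by (simp add: add_divide_distrib)

lemma rel_spread_contracts:
  assumes "\<omega> \<in> space M" and "l \<in> {1..d}"
  shows "rel_spread l (n + m0) \<omega> + contraction_rate P \<gamma> m0 * (indicator (covering_event n) \<omega> * rel_spread l n \<omega>)
    \<le> rel_spread l n \<omega> + 2 * (\<Sum>q\<in>{n..<n+m0}. noise_mass l q \<omega> * rel_spread l q \<omega>)"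
  using divide_right_mono[OF coord_spread_contracts[OF assms, of n], of "1 + coord_spread l 0 \<omega>"]
    coord_spread_nonneg[of l 0 \<omega>]
  unfolding rel_spread_def by (simp add: add_divide_distrib sum_divide_distrib[symmetric])


lemma coord_spread_measurable:
  "past n \<subseteq> J \<Longrightarrow> l \<in> {1..d} \<Longrightarrow> coord_spread l n \<in> borel_measurable (generated J)"
  unfolding coord_spread_def spread_def
  by (intro borel_measurable_diff borel_measurable_Max borel_measurable_Min finite_atLeastAtMost
      x_measurable_past) auto

lemma noise_mass_measurable:
  "Noise n \<in> J \<Longrightarrow> l \<in> {1..d} \<Longrightarrow> noise_mass l n \<in> borel_measurable (generated J)"
  unfolding noise_mass_def by (intro borel_measurable_sum borel_measurable_abs \<eta>_measurable_generated) auto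

lemma rel_spread_measurable:
  assumes "past n \<subseteq> J" and "l \<in> {1..d}"
  shows "rel_spread l n \<in> borel_measurable (generated J)"
proof -
  have "past 0 \<subseteq> J" using assms(1) by (auto simp: past_def)
  then show ?thesis unfolding rel_spread_def
    by (intro borel_measurable_divide borel_measurable_add borel_measurable_const
        coord_spread_measurable assms)
qed

lemma covering_event_generated:
  assumes "Batch ` {n..<n+m0} \<subseteq> J"
  shows "covering_event n \<in> sets (generated J)"
proof -
  have "covering_event n = (\<Inter>k\<in>{..<m0}. B (n + k) -` {Ps (Suc k)} \<inter> space (generated J))"
    unfolding covering_event_def using m0_pos by auto
  also have "\<dots> \<in> sets (generated J)"
    using assms m0_pos by (intro sets.finite_INT measurable_sets[OF B_measurable_generated]) auto
  finally show ?thesis .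
qed

lemma measurable_from_generated: "f \<in> borel_measurable (generated J) \<Longrightarrow> f \<in> borel_measurable M"
  by (rule measurable_from_subalg[OF subalgebra_generated])

lemma covering_event_sets: "covering_event n \<in> sets M"
  using covering_event_generated[of n UNIV] subalgebra_generated unfolding subalgebra_def by auto

lemma prob_covering_event: "prob (covering_event n) = covering_prob N P m0"
proof -
  define A where "A j = (case j of Batch k \<Rightarrow> {\<omega>\<in>space M. B k \<omega> = Ps (Suc (k - n))} | _ \<Rightarrow> {})" for j
  define J where "J = (\<lambda>k. Batch (n + k)) ` {..<m0}"
  have A_Batch: "A (Batch (n + k)) = {\<omega>\<in>space M. B (n + k) \<omega> = Ps (Suc k)}" for k
    unfolding A_def by simp
  have "covering_event n = (\<Inter>j\<in>J. A j)"
    unfolding covering_event_def J_def using m0_pos by (auto simp: A_Batch)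
  moreover have "prob (\<Inter>j\<in>J. A j) = (\<Prod>j\<in>J. prob (A j))"
  proof (rule indep_setsD[OF indep_generator])
    show "\<forall>j\<in>J. A j \<in> generator j"
    proof
      fix j assume "j \<in> J"
      then obtain k where j: "j = Batch (n + k)" unfolding J_def by blast
      have "A j = B (n + k) -` {Ps (Suc k)} \<inter> space M" unfolding j A_Batch by auto
      then show "A j \<in> generator j" unfolding j generator_def by (simp, blast)
    qed
  qed (use m0_pos in \<open>auto simp: J_def\<close>)
  ultimately have "prob (covering_event n) = (\<Prod>j\<in>J. prob (A j))" by simp
  also have "\<dots> = (\<Prod>k<m0. prob {\<omega>\<in>space M. B (n + k) \<omega> = Ps (Suc k)})"
    unfolding J_def by (subst prod.reindex) (auto simp: inj_on_def A_Batch)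
  also have "\<dots> = (\<Prod>k<m0. 1 / real (card (batch_partitions N P)))"
    using Ps prob_B_eq by (intro prod.cong) auto
  finally show ?thesis by (simp add: covering_prob_def)
qed

lemma \<eta>_measurable_M: "i \<in> {1..N} \<Longrightarrow> l \<in> {1..d} \<Longrightarrow> \<eta> n i l \<in> borel_measurable M"
  by (intro measurable_from_generated[of _ UNIV] \<eta>_measurable_generated) auto

lemma nn_integral_noise_mass_le:
  assumes l: "l \<in> {1..d}" and \<zeta>: "0 \<le> \<zeta>" "\<zeta> \<le> r" and r: "0 < r"
  shows "(\<integral>\<^sup>+\<omega>. ennreal (noise_mass l n \<omega>) \<partial>M) \<le> ennreal (real N * r)"
proof -
  have "(\<integral>\<^sup>+\<omega>. ennreal (noise_mass l n \<omega>) \<partial>M) = (\<Sum>i\<in>{1..N}. \<integral>\<^sup>+\<omega>. ennreal \<bar>\<eta> n i l \<omega>\<bar> \<partial>M)"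
    unfolding noise_mass_def using l
    by (subst nn_integral_sum[symmetric])
      (auto intro!: nn_integral_cong borel_measurable_abs \<eta>_measurable_M simp: sum_ennreal)
  also have "\<dots> \<le> (\<Sum>i\<in>{1..N}. ennreal r)"
  proof (intro sum_mono nn_integral_abs_le_of_second_moment r)
    fix i assume i: "i \<in> {1..N}"
    show "integrable M (\<lambda>\<omega>. (\<eta> n i l \<omega>)\<^sup>2)" by (rule \<eta>_square_integrable[OF i l])
    show "(\<integral>\<omega>. (\<eta> n i l \<omega>)\<^sup>2 \<partial>M) \<le> r\<^sup>2"
      using \<eta>_second_moment[OF i l, of n] power_mono[OF \<zeta>(2,1), of 2] by linarith
  qed
  also have "\<dots> = ennreal (real N * r)" using r by (simp add: ennreal_of_nat_eq_real_of_nat ennreal_mult)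
  finally show ?thesis .
qed

definition expected_rel_spread :: "nat \<Rightarrow> nat \<Rightarrow> ennreal" where
  "expected_rel_spread l n = (\<integral>\<^sup>+\<omega>. ennreal (rel_spread l n \<omega>) \<partial>M)"

lemma nn_integral_noise_mass_mult_rel_spread:
  assumes "l \<in> {1..d}"
  shows "(\<integral>\<^sup>+\<omega>. ennreal (noise_mass l n \<omega> * rel_spread l n \<omega>) \<partial>M)
    = (\<integral>\<^sup>+\<omega>. ennreal (noise_mass l n \<omega>) \<partial>M) * expected_rel_spread l n"
  unfolding expected_rel_spread_def
  by (rule nn_integral_mult_indep[of "{Noise n}" "past n"])
    (use assms in \<open>auto simp: past_def noise_mass_nonneg rel_spread_nonneg
      intro: noise_mass_measurable rel_spread_measurable\<close>)

lemma nn_integral_covering_mult_rel_spread: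
  assumes "l \<in> {1..d}"
  shows "(\<integral>\<^sup>+\<omega>. ennreal (indicator (covering_event n) \<omega> * rel_spread l n \<omega>) \<partial>M)
    = ennreal (covering_prob N P m0) * expected_rel_spread l n"
proof -
  have "(\<integral>\<^sup>+\<omega>. ennreal (indicator (covering_event n) \<omega> * rel_spread l n \<omega>) \<partial>M)
    = (\<integral>\<^sup>+\<omega>. ennreal (indicator (covering_event n) \<omega>) \<partial>M) * expected_rel_spread l n"
    unfolding expected_rel_spread_def
    by (rule nn_integral_mult_indep[of "Batch ` {n..<n+m0}" "past n"])
      (use assms in \<open>auto simp: past_def rel_spread_nonneg
        intro: rel_spread_measurable borel_measurable_indicator covering_event_generated\<close>)
  also have "(\<integral>\<^sup>+\<omega>. ennreal (indicator (covering_event n) \<omega>) \<partial>M) = ennreal (covering_prob N P m0)"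
    using covering_event_sets prob_covering_event[of n] by (simp add: ennreal_indicator emeasure_eq_measure)
  finally show ?thesis .
qed

lemma rel_spread_measurable_M: "l \<in> {1..d} \<Longrightarrow> rel_spread l n \<in> borel_measurable M"
  and noise_mass_measurable_M: "l \<in> {1..d} \<Longrightarrow> noise_mass l n \<in> borel_measurable M"
  and coord_spread_measurable_M: "l \<in> {1..d} \<Longrightarrow> coord_spread l n \<in> borel_measurable M"
  by (intro measurable_from_generated[of _ UNIV] rel_spread_measurable noise_mass_measurable
      coord_spread_measurable; simp)+

lemma noise_mass_mult_rel_spread_measurable:
  "l \<in> {1..d} \<Longrightarrow> (\<lambda>\<omega>. noise_mass l q \<omega> * rel_spread l q \<omega>) \<in> borel_measurable M"
  by (intro borel_measurable_times noise_mass_measurable_M rel_spread_measurable_M)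

lemma expected_rel_spread_Suc_le:
  assumes l: "l \<in> {1..d}" and \<zeta>: "0 \<le> \<zeta>" "\<zeta> \<le> r" and r: "0 < r"
  shows "expected_rel_spread l (Suc n) \<le> (1 + 2 * ennreal (real N * r)) * expected_rel_spread l n"
proof -
  have "expected_rel_spread l (Suc n)
      \<le> (\<integral>\<^sup>+\<omega>. ennreal (rel_spread l n \<omega> + 2 * (noise_mass l n \<omega> * rel_spread l n \<omega>)) \<partial>M)"
    unfolding expected_rel_spread_def by (intro nn_integral_mono ennreal_leI rel_spread_Suc_le l)
  also have "\<dots> = expected_rel_spread l n + 2 * (\<integral>\<^sup>+\<omega>. ennreal (noise_mass l n \<omega> * rel_spread l n \<omega>) \<partial>M)"
    unfolding expected_rel_spread_def using l
    by (subst nn_integral_add_cmult_real)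
      (auto simp: rel_spread_nonneg noise_mass_nonneg rel_spread_measurable_M
        noise_mass_mult_rel_spread_measurable)
  also have "\<dots> \<le> expected_rel_spread l n + 2 * (ennreal (real N * r) * expected_rel_spread l n)"
    unfolding nn_integral_noise_mass_mult_rel_spread[OF l]
    by (intro add_left_mono mult_left_mono mult_right_mono nn_integral_noise_mass_le l \<zeta> r) auto
  finally show ?thesis by (simp add: algebra_simps)
qed

lemma nn_integral_sum_noise_mass_mult_rel_spread:
  assumes l: "l \<in> {1..d}"
  shows "(\<integral>\<^sup>+\<omega>. ennreal (\<Sum>q\<in>Q. noise_mass l q \<omega> * rel_spread l q \<omega>) \<partial>M)
    = (\<Sum>q\<in>Q. \<integral>\<^sup>+\<omega>. ennreal (noise_mass l q \<omega> * rel_spread l q \<omega>) \<partial>M)"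
proof -
  have "(\<integral>\<^sup>+\<omega>. ennreal (\<Sum>q\<in>Q. noise_mass l q \<omega> * rel_spread l q \<omega>) \<partial>M)
    = (\<integral>\<^sup>+\<omega>. (\<Sum>q\<in>Q. ennreal (noise_mass l q \<omega> * rel_spread l q \<omega>)) \<partial>M)"
    by (intro nn_integral_cong sum_ennreal[symmetric] mult_nonneg_nonneg noise_mass_nonneg rel_spread_nonneg)
  also have "\<dots> = (\<Sum>q\<in>Q. \<integral>\<^sup>+\<omega>. ennreal (noise_mass l q \<omega> * rel_spread l q \<omega>) \<partial>M)"
    by (intro nn_integral_sum measurable_compose[OF noise_mass_mult_rel_spread_measurable[OF l] measurable_ennreal])
  finally show ?thesis .
qed

lemma expected_rel_spread_contracts:
  assumes l: "l \<in> {1..d}" and \<zeta>: "0 \<le> \<zeta>" "\<zeta> \<le> r" and r: "0 < r"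
  shows "expected_rel_spread l (n + m0)
      + ennreal (contraction_rate P \<gamma> m0) * (ennreal (covering_prob N P m0) * expected_rel_spread l n)
    \<le> expected_rel_spread l n + 2 * (ennreal (real N * r) * (\<Sum>q\<in>{n..<n+m0}. expected_rel_spread l q))"
proof -
  let ?\<delta> = "contraction_rate P \<gamma> m0"
  let ?S = "\<lambda>\<omega>. \<Sum>q\<in>{n..<n+m0}. noise_mass l q \<omega> * rel_spread l q \<omega>"
  have \<delta>: "0 \<le> ?\<delta>" using contraction_rate_pos_le_1[OF \<gamma>_pos \<gamma>_less_1, of P m0] P_ge_2 by simp
  have covering_meas: "(\<lambda>\<omega>. indicator (covering_event n) \<omega> * rel_spread l n \<omega>) \<in> borel_measurable M"
    using covering_event_sets rel_spread_measurable_M[OF l] by measurable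
  have S_meas: "?S \<in> borel_measurable M"
    using noise_mass_mult_rel_spread_measurable[OF l] by measurable
  have S_nonneg: "0 \<le> ?S \<omega>" for \<omega>
    by (intro sum_nonneg mult_nonneg_nonneg noise_mass_nonneg rel_spread_nonneg)
  have "expected_rel_spread l (n + m0) + ennreal ?\<delta> * (ennreal (covering_prob N P m0) * expected_rel_spread l n)
    = (\<integral>\<^sup>+\<omega>. ennreal (rel_spread l (n + m0) \<omega> + ?\<delta> * (indicator (covering_event n) \<omega> * rel_spread l n \<omega>)) \<partial>M)"
    unfolding nn_integral_covering_mult_rel_spread[OF l, symmetric] expected_rel_spread_def[of l "n + m0"]
    by (rule nn_integral_add_cmult_real[symmetric])
      (use rel_spread_measurable_M[OF l] covering_meas \<delta> in \<open>auto simp: rel_spread_nonneg\<close>)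
  also have "\<dots> \<le> (\<integral>\<^sup>+\<omega>. ennreal (rel_spread l n \<omega> + 2 * ?S \<omega>) \<partial>M)"
    by (intro nn_integral_mono ennreal_leI rel_spread_contracts l)
  also have "\<dots> = expected_rel_spread l n + 2 * (\<integral>\<^sup>+\<omega>. ennreal (?S \<omega>) \<partial>M)"
    unfolding expected_rel_spread_def
    using nn_integral_add_cmult_real[OF rel_spread_measurable_M[OF l] S_meas rel_spread_nonneg S_nonneg, of 2]
    by simp
  also have "\<dots> \<le> expected_rel_spread l n + 2 * (\<Sum>q\<in>{n..<n+m0}. ennreal (real N * r) * expected_rel_spread l q)"
    unfolding nn_integral_sum_noise_mass_mult_rel_spread[OF l] nn_integral_noise_mass_mult_rel_spread[OF l]
    by (intro add_left_mono mult_left_mono sum_mono mult_right_mono nn_integral_noise_mass_le l \<zeta> r) auto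
  finally show ?thesis by (simp add: sum_distrib_left)
qed

lemma expected_rel_spread_0_le_1: "expected_rel_spread l 0 \<le> 1"
proof -
  have "expected_rel_spread l 0 \<le> (\<integral>\<^sup>+\<omega>. 1 \<partial>M)"
    unfolding expected_rel_spread_def by (intro nn_integral_mono) (simp add: rel_spread_0_le_1)
  then show ?thesis by (simp add: emeasure_space_1)
qed

lemma expected_rel_spread_finite:
  assumes l: "l \<in> {1..d}" and \<zeta>: "0 \<le> \<zeta>" "\<zeta> \<le> r" and r: "0 < r"
  shows "expected_rel_spread l n < \<top>"
proof (induction n)
  case 0
  then show ?case using expected_rel_spread_0_le_1[of l] by (simp add: le_less_trans)
next
  case (Suc n)
  have "expected_rel_spread l (Suc n) \<le> (1 + 2 * ennreal (real N * r)) * expected_rel_spread l n"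
    by (rule expected_rel_spread_Suc_le[OF assms])
  also have "\<dots> < \<top>" using Suc by (simp add: ennreal_mult_less_top)
  finally show ?case .
qed


definition mean_rel_spread :: "nat \<Rightarrow> nat \<Rightarrow> real" where
  "mean_rel_spread l n = enn2real (expected_rel_spread l n)"

context
  fixes l :: nat and r :: real
  assumes l: "l \<in> {1..d}" and \<zeta>: "0 \<le> \<zeta>" "\<zeta> \<le> r" and r: "0 < r"
begin

lemma expected_rel_spread_eq: "expected_rel_spread l n = ennreal (mean_rel_spread l n)"
  using expected_rel_spread_finite[OF l \<zeta> r, of n] unfolding mean_rel_spread_def by (simp add: less_top)

lemma mean_rel_spread_nonneg: "0 \<le> mean_rel_spread l n"
  unfolding mean_rel_spread_def by simp

lemma mean_rel_spread_Suc_le: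
  "mean_rel_spread l (Suc n) \<le> (1 + 2 * (real N * r)) * mean_rel_spread l n"
proof -
  have "ennreal (mean_rel_spread l (Suc n)) \<le> ennreal ((1 + 2 * (real N * r)) * mean_rel_spread l n)"
    using expected_rel_spread_Suc_le[OF l \<zeta> r, of n] r mean_rel_spread_nonneg[of n]
    unfolding expected_rel_spread_eq by (simp add: ennreal_mult'' ennreal_plus)
  then show ?thesis using r mean_rel_spread_nonneg[of n] by (simp add: ennreal_le_iff)
qed

lemma mean_rel_spread_contracts:
  "mean_rel_spread l (n + m0) + contraction_rate P \<gamma> m0 * covering_prob N P m0 * mean_rel_spread l n
    \<le> mean_rel_spread l n + 2 * (real N * r) * (\<Sum>q\<in>{n..<n+m0}. mean_rel_spread l q)"
proof -
  let ?\<alpha> = "mean_rel_spread l"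
  have sum_nonneg: "0 \<le> (\<Sum>q\<in>{n..<n+m0}. ?\<alpha> q)" by (intro sum_nonneg mean_rel_spread_nonneg)
  have nonneg: "0 \<le> contraction_rate P \<gamma> m0" "0 \<le> covering_prob N P m0" "0 \<le> real N * r"
    "0 \<le> real N * r * (\<Sum>q\<in>{n..<n+m0}. ?\<alpha> q)"
    using contraction_rate_pos_le_1[OF \<gamma>_pos \<gamma>_less_1, of P m0] P_ge_2 r sum_nonneg
      covering_prob_pos_le_1[OF batch_partitions_nonempty, of m0] by auto
  have "ennreal (?\<alpha> (n + m0) + contraction_rate P \<gamma> m0 * covering_prob N P m0 * ?\<alpha> n)
      = expected_rel_spread l (n + m0)
        + ennreal (contraction_rate P \<gamma> m0) * (ennreal (covering_prob N P m0) * expected_rel_spread l n)"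
    unfolding expected_rel_spread_eq using nonneg mean_rel_spread_nonneg
    by (simp add: ennreal_plus ennreal_mult mult.assoc)
  also have "\<dots> \<le> expected_rel_spread l n + 2 * (ennreal (real N * r) * (\<Sum>q\<in>{n..<n+m0}. expected_rel_spread l q))"
    by (rule expected_rel_spread_contracts[OF l \<zeta> r])
  also have "\<dots> = ennreal (?\<alpha> n + 2 * (real N * r) * (\<Sum>q\<in>{n..<n+m0}. ?\<alpha> q))"
  proof -
    have "(\<Sum>q\<in>{n..<n+m0}. expected_rel_spread l q) = ennreal (\<Sum>q\<in>{n..<n+m0}. ?\<alpha> q)"
      unfolding expected_rel_spread_eq by (intro sum_ennreal mean_rel_spread_nonneg)
    moreover have "ennreal (real N * r) * ennreal (\<Sum>q\<in>{n..<n+m0}. ?\<alpha> q)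
        = ennreal (real N * r * (\<Sum>q\<in>{n..<n+m0}. ?\<alpha> q))"
      using nonneg(3) sum_nonneg by (simp add: ennreal_mult)
    moreover have "ennreal (?\<alpha> n + 2 * (real N * r) * (\<Sum>q\<in>{n..<n+m0}. ?\<alpha> q))
        = ennreal (?\<alpha> n) + 2 * ennreal (real N * r * (\<Sum>q\<in>{n..<n+m0}. ?\<alpha> q))"
      using nonneg(4) mean_rel_spread_nonneg[of n] by (simp add: ennreal_plus ennreal_mult'' mult.assoc)
    ultimately show ?thesis unfolding expected_rel_spread_eq[of n] by simp
  qed
  finally show ?thesis
    by (rule ennreal_le_iff[THEN iffD1, rotated]) (use nonneg(3) sum_nonneg mean_rel_spread_nonneg[of n] in simp)
qed

end

lemma summable_mean_rel_spread_exp: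
  assumes l: "l \<in> {1..d}" and \<zeta>: "0 \<le> \<zeta>" "\<zeta> < noise_threshold N P \<gamma> m0"
  shows "summable (\<lambda>n. mean_rel_spread l n * exp (decay_rate N P \<gamma> m0 * real n))"
proof -
  define c where "c = contraction_rate P \<gamma> m0 * covering_prob N P m0"
  define r where "r = noise_threshold N P \<gamma> m0"
  define \<kappa> where "\<kappa> = real N * r"
  have c: "0 < c" "c \<le> 1"
    using contraction_rate_pos_le_1[OF \<gamma>_pos \<gamma>_less_1, of P m0] P_ge_2
      covering_prob_pos_le_1[OF batch_partitions_nonempty, of m0]
      mult_le_one[of "contraction_rate P \<gamma> m0" "covering_prob N P m0"]
    unfolding c_def by auto
  have r: "\<zeta> \<le> r" "0 < r" unfolding r_def
    using noise_threshold_pos[OF \<gamma>_pos \<gamma>_less_1 _ batch_partitions_nonempty] P_ge_2 N_ge_2 m0_pos \<zeta>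
    by auto
  have \<kappa>: "4 * real m0 * 2^m0 * \<kappa> = c" "0 \<le> \<kappa>"
    using N_ge_2 m0_pos r(2) unfolding \<kappa>_def
    by (simp_all add: r_def noise_threshold_def c_def field_simps)
  note grow = mean_rel_spread_Suc_le[OF l \<zeta>(1) r, folded \<kappa>_def]
  note nonneg = mean_rel_spread_nonneg[OF l \<zeta>(1) r]
  have "mean_rel_spread l (n + m0) \<le> (1 - c / 2) * mean_rel_spread l n" for n
    by (rule periodic_contraction_of_recursions[where \<alpha>="mean_rel_spread l", OF nonneg \<kappa>(2)
          \<kappa>(1)[THEN eq_refl] c(2) grow mean_rel_spread_contracts[OF l \<zeta>(1) r, folded \<kappa>_def c_def]])
  moreover have "mean_rel_spread l k \<le> 2^m0" if "k < m0" for k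
  proof -
    have "1 * 1 \<le> real m0 * 2^m0" using m0_pos by (intro mult_mono) auto
    then have "2 * \<kappa> \<le> 4 * real m0 * 2^m0 * \<kappa>" using \<kappa>(2) by (intro mult_right_mono) auto
    then have "2 * \<kappa> \<le> 1" using \<kappa>(1) c(2) by linarith
    then have "mean_rel_spread l (0 + k) \<le> 2^m0 * mean_rel_spread l 0"
      using that by (intro power_growth_le_pow2[where \<alpha>="mean_rel_spread l", OF nonneg \<kappa>(2) _ grow]) auto
    also have "\<dots> \<le> 2^m0 * 1"
      using expected_rel_spread_0_le_1[of l] unfolding expected_rel_spread_eq[OF l \<zeta>(1) r]
      by (intro mult_left_mono) auto
    finally show ?thesis by simp
  qed
  ultimately have "summable (\<lambda>n. mean_rel_spread l n * exp (- ln (1 - c / 2) / (2 * real m0) * real n))"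
    using c m0_pos by (intro summable_exp_weighted_of_periodic_contraction[OF nonneg]) auto
  then show ?thesis unfolding decay_rate_def c_def .
qed

lemma coord_spread_exp_bound:
  assumes l: "l \<in> {1..d}" and \<zeta>: "0 \<le> \<zeta>" "\<zeta> < noise_threshold N P \<gamma> m0"
  shows "\<exists>C\<in>borel_measurable M. (\<forall>\<omega>\<in>space M. 0 < C \<omega>) \<and>
    (AE \<omega> in M. \<forall>n. coord_spread l n \<omega> \<le> C \<omega> * exp (- decay_rate N P \<gamma> m0 * real n))"
proof -
  let ?\<Lambda> = "decay_rate N P \<gamma> m0"
  define f where "f n \<omega> = rel_spread l n \<omega> * exp (?\<Lambda> * real n)" for n \<omega>
  have r: "0 < noise_threshold N P \<gamma> m0" using \<zeta> by linarith
  have integral_f: "(\<integral>\<^sup>+\<omega>. ennreal (f n \<omega>) \<partial>M) = expected_rel_spread l n * ennreal (exp (?\<Lambda> * real n))" for n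
    unfolding f_def expected_rel_spread_def using rel_spread_measurable_M[OF l]
    by (simp add: rel_spread_nonneg ennreal_mult nn_integral_multc)
  have "\<exists>C0\<in>borel_measurable M. (\<forall>\<omega>. 0 \<le> C0 \<omega>) \<and> (AE \<omega> in M. \<forall>n. f n \<omega> \<le> C0 \<omega>)"
  proof (rule AE_bounded_of_summable_nn_integral)
    show "f n \<in> borel_measurable M" for n
      unfolding f_def using rel_spread_measurable_M[OF l] by measurable
    show "0 \<le> f n \<omega>" for n \<omega> unfolding f_def by (simp add: rel_spread_nonneg)
    show "summable (\<lambda>n. enn2real (\<integral>\<^sup>+\<omega>. ennreal (f n \<omega>) \<partial>M))"
      unfolding integral_f using summable_mean_rel_spread_exp[OF l \<zeta>]
    by (simp add: enn2real_mult mean_rel_spread_def)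
    show "(\<integral>\<^sup>+\<omega>. ennreal (f n \<omega>) \<partial>M) \<noteq> \<top>" for n
      unfolding integral_f using expected_rel_spread_finite[OF l \<zeta>(1) _ r] \<zeta>(2)
      by (simp add: ennreal_mult_eq_top_iff less_top)
  qed
  then obtain C0 where C0: "C0 \<in> borel_measurable M" "\<And>\<omega>. 0 \<le> C0 \<omega>"
    and bound: "AE \<omega> in M. \<forall>n. f n \<omega> \<le> C0 \<omega>" by blast
  define C where "C \<omega> = (1 + coord_spread l 0 \<omega>) * C0 \<omega> + 1" for \<omega>
  have C_meas: "C \<in> borel_measurable M" unfolding C_def using C0(1) coord_spread_measurable_M[OF l] by measurable
  have C_pos: "0 < C \<omega>" for \<omega>
    unfolding C_def using C0(2)[of \<omega>] coord_spread_nonneg[of l 0 \<omega>]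
    by (intro add_nonneg_pos mult_nonneg_nonneg) auto
  have bound_coord_spread: "coord_spread l n \<omega> \<le> C \<omega> * exp (- ?\<Lambda> * real n)" if "f n \<omega> \<le> C0 \<omega>" for n \<omega>
  proof -
    have pos: "0 < 1 + coord_spread l 0 \<omega>" using coord_spread_nonneg[of l 0 \<omega>] by simp
    have "rel_spread l n \<omega> = f n \<omega> * exp (- ?\<Lambda> * real n)"
      unfolding f_def by (simp add: mult.assoc exp_minus_inverse)
    also have "\<dots> \<le> C0 \<omega> * exp (- ?\<Lambda> * real n)" using that by (simp add: mult_right_mono)
    finally have "coord_spread l n \<omega> \<le> (1 + coord_spread l 0 \<omega>) * (C0 \<omega> * exp (- ?\<Lambda> * real n))"
      using pos unfolding rel_spread_def by (simp add: divide_le_eq mult.commute)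
    also have "\<dots> \<le> C \<omega> * exp (- ?\<Lambda> * real n)" unfolding C_def by (simp add: algebra_simps)
    finally show ?thesis .
  qed
  have "AE \<omega> in M. \<forall>n. coord_spread l n \<omega> \<le> C \<omega> * exp (- ?\<Lambda> * real n)"
    using bound by (rule eventually_mono) (use bound_coord_spread in blast)
  then show ?thesis using C_meas C_pos by blast
qed

lemma consensus_exp_bound:
  assumes d: "1 \<le> d" and \<zeta>: "0 \<le> \<zeta>" "\<zeta> < noise_threshold N P \<gamma> m0"
  shows "\<exists>C. (\<forall>l\<in>{1..d}. C l \<in> borel_measurable M \<and> (\<forall>\<omega>\<in>space M. 0 < C l \<omega>)) \<and>
    (AE \<omega> in M. \<forall>n.
      (\<forall>l\<in>{1..d}. spread N (\<lambda>i. x n i l \<omega>) \<le> C l \<omega> * exp (- decay_rate N P \<gamma> m0 * real n)) \<and>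
      (MAX (i, j)\<in>{1..N} \<times> {1..N}. MAX l\<in>{1..d}. \<bar>x n i l \<omega> - x n j l \<omega>\<bar>)
        \<le> (MAX l\<in>{1..d}. C l \<omega>) * exp (- decay_rate N P \<gamma> m0 * real n))"
proof -
  let ?\<Lambda> = "decay_rate N P \<gamma> m0"
  have "\<forall>l\<in>{1..d}. \<exists>C. C \<in> borel_measurable M \<and> (\<forall>\<omega>\<in>space M. 0 < C \<omega>) \<and>
      (AE \<omega> in M. \<forall>n. coord_spread l n \<omega> \<le> C \<omega> * exp (- ?\<Lambda> * real n))"
  proof
    fix l assume "l \<in> {1..d}"
    from coord_spread_exp_bound[OF this \<zeta>] show "\<exists>C. C \<in> borel_measurable M \<and> (\<forall>\<omega>\<in>space M. 0 < C \<omega>) \<and>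
      (AE \<omega> in M. \<forall>n. coord_spread l n \<omega> \<le> C \<omega> * exp (- ?\<Lambda> * real n))" by blast
  qed
  then obtain C where C: "\<forall>l\<in>{1..d}. C l \<in> borel_measurable M \<and> (\<forall>\<omega>\<in>space M. 0 < C l \<omega>) \<and>
      (AE \<omega> in M. \<forall>n. coord_spread l n \<omega> \<le> C l \<omega> * exp (- ?\<Lambda> * real n))"
    by (rule bchoice[THEN exE])
  have "AE \<omega> in M. \<forall>l\<in>{1..d}. \<forall>n. coord_spread l n \<omega> \<le> C l \<omega> * exp (- ?\<Lambda> * real n)"
    using C by (intro AE_finite_allI) auto
  then have "AE \<omega> in M. \<forall>n.
      (\<forall>l\<in>{1..d}. spread N (\<lambda>i. x n i l \<omega>) \<le> C l \<omega> * exp (- ?\<Lambda> * real n)) \<and>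
      (MAX (i, j)\<in>{1..N} \<times> {1..N}. MAX l\<in>{1..d}. \<bar>x n i l \<omega> - x n j l \<omega>\<bar>)
        \<le> (MAX l\<in>{1..d}. C l \<omega>) * exp (- ?\<Lambda> * real n)"
  proof (rule eventually_mono, intro allI conjI)
    fix \<omega> n assume "\<forall>l\<in>{1..d}. \<forall>n. coord_spread l n \<omega> \<le> C l \<omega> * exp (- ?\<Lambda> * real n)"
    then have spread_le: "\<And>l. l \<in> {1..d} \<Longrightarrow> spread N (\<lambda>i. x n i l \<omega>) \<le> C l \<omega> * exp (- ?\<Lambda> * real n)"
      unfolding coord_spread_def by blast
    then show "\<forall>l\<in>{1..d}. spread N (\<lambda>i. x n i l \<omega>) \<le> C l \<omega> * exp (- ?\<Lambda> * real n)" by blast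
    show "(MAX (i, j)\<in>{1..N} \<times> {1..N}. MAX l\<in>{1..d}. \<bar>x n i l \<omega> - x n j l \<omega>\<bar>)
        \<le> (MAX l\<in>{1..d}. C l \<omega>) * exp (- ?\<Lambda> * real n)"
      by (rule max_abs_diff_le_of_spread_le[OF spread_le]) (use d N_ge_2 in auto)
  qed
  with C show ?thesis by blast
qed

end

theorem theorem4p2:
  fixes N P m0 :: nat and \<gamma> :: real
  assumes "N \<ge> 2" and "P \<ge> 2" and "0 < \<gamma>" and "\<gamma> < 1"
    and "covering_property N P m0"
  shows "\<exists>\<zeta>2 > 0. \<forall>\<zeta>. 0 \<le> \<zeta> \<and> \<zeta> < \<zeta>2 \<longrightarrow>
     (\<exists>\<Lambda>2 > 0. \<forall>(d::nat) w (M::'a measure) B \<eta> X0 x.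
        d \<ge> 1 \<and> rbcbo_model N P \<gamma> \<zeta> d w M B \<eta> X0 x \<longrightarrow>
        (\<exists>C :: nat \<Rightarrow> 'a \<Rightarrow> real.
           (\<forall>l\<in>{1..d}. C l \<in> borel_measurable M \<and> (\<forall>\<omega>\<in>space M. 0 < C l \<omega>)) \<and>
           (AE \<omega> in M. \<forall>n::nat.
              (\<forall>l\<in>{1..d}. spread N (\<lambda>i. x n i l \<omega>) \<le> C l \<omega> * exp (- \<Lambda>2 * real n)) \<and>
              (MAX (i, j)\<in>{1..N} \<times> {1..N}. MAX l\<in>{1..d}. \<bar>x n i l \<omega> - x n j l \<omega>\<bar>)
                 \<le> (MAX l\<in>{1..d}. C l \<omega>) * exp (- \<Lambda>2 * real n))))"
proof -
  obtain Ps where m0: "0 < m0" and Ps: "\<And>k. k \<in> {1..m0} \<Longrightarrow> Ps k \<in> batch_partitions N P"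
    and covering: "\<And>i j. i \<in> {1..N} \<Longrightarrow> j \<in> {1..N} \<Longrightarrow> \<exists>k\<in>{1..m0}. \<exists>S\<in>Ps k. i \<in> S \<and> j \<in> S"
    using assms(5) unfolding covering_property_def by blast
  have "batch_partitions N P \<noteq> {}" using Ps[of 1] m0 by auto
  then have rates: "0 < noise_threshold N P \<gamma> m0" "0 < decay_rate N P \<gamma> m0"
    using noise_threshold_pos[OF assms(3,4)] decay_rate_pos[OF assms(3,4)] assms(1,2) m0 by auto
  show ?thesis
    by (rule exI[of _ "noise_threshold N P \<gamma> m0"], intro conjI allI impI rates(1),
        rule exI[of _ "decay_rate N P \<gamma> m0"], intro conjI allI impI rates(2), elim conjE)
      (rule rbcbo_covering.consensus_exp_bound[OF rbcbo_covering.intro[OF _ assms(1-4) m0 Ps covering]])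
qed

end
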